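(* Let $1 < p < \infty$. Then $J_n$ is the unique Chebyshev center of $\Omega_n$ relative to the metric space $(M_n(\mathbb{R}), \|\cdot\|_{\mathcal{S}_p})$ (i.e. the unique $A\in M_n(\mathbb{R})$ minimizing $\sup_{B\in\Omega_n}\|A-B\|_{\mathcal{S}_p}$), and the corresponding Chebyshev radius is $$ \inf_{A\in M_n(\mathbb{R})}\sup_{B\in\Omega_n}\|A-B\|_{\mathcal{S}_p} = (n-1)^{1/p}. $$
   Context: $\Omega_n$ denotes the set of $n\times n$ doubly stochastic matrices (nonnegative real entries, all row and column sums equal to $1$). $J_n$ is the $n\times n$ matrix with all entries equal to $1/n$. For $p\ge1$, $\|A\|_{\mathcal{S}_p} := \big(\sum_{i=1}^n\sigma_i(A)^p\big)^{1/p}$ where $\sigma_i(A)$ are the singular values of $A$. Given a constraint set $\mathcal{R}\subseteq M_n(\mathbb{R})$ and a norm, the Chebyshev radius of $\Omega_n$ is $\inf_{A\in\mathcal{R}}\sup_{B\in\Omega_n}\|A-B\|$ and a Chebyshev center is any $A\in\mathcal{R}$ attaining this infimum; "relative to the metric space $(M_n(\mathbb{R}),\|\cdot\|)$" means $\mathcal{R}=M_n(\mathbb{R})$. *)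

theory Defs
  imports "HOL-Analysis.Analysis"
begin

definition doubly_stochastic :: "(real^'n^'n) set" where
  "doubly_stochastic = {B. (\<forall>i j. B $ i $ j \<ge> 0) \<and>
      (\<forall>i. (\<Sum>j\<in>UNIV. B $ i $ j) = 1) \<and> (\<forall>j. (\<Sum>i\<in>UNIV. B $ i $ j) = 1)}"

definition Jmat :: "real^'n^'n" where
  "Jmat = (\<chi> i j. 1 / real CARD('n))"

definition diag_mat :: "('n \<Rightarrow> real) \<Rightarrow> real^'n^'n" where
  "diag_mat s = (\<chi> i j. if i = j then s i else 0)"

definition singular_values :: "real^'n^'n \<Rightarrow> ('n \<Rightarrow> real)" where
  "singular_values A = (SOME s. (\<forall>i. s i \<ge> 0) \<and>
      (\<exists>U V. orthogonal_matrix U \<and> orthogonal_matrix V \<and>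
             A = U ** diag_mat s ** transpose V))"

definition schatten_norm :: "real \<Rightarrow> real^'n^'n \<Rightarrow> real" where
  "schatten_norm p A = (\<Sum>i\<in>UNIV. singular_values A i powr p) powr (1 / p)"

end

theory Submission
  imports Defs
begin

text \<open>For doubly stochastic \<open>B\<close>, the matrix \<open>J - B\<close> kills the all-ones vector and is a
  contraction, so its singular values lie in \<open>[0, 1]\<close> and one of them is \<open>0\<close>; hence
  \<open>\<parallel>J - B\<parallel>\<^sub>p\<^sup>p \<le> n - 1\<close>. Conversely, given \<open>A\<close>, let \<open>a\<close> be its mean row sum and pick a
  permutation \<open>\<sigma>\<close> with \<open>t = (\<Sum>i. A i (\<sigma> i)) \<le> a\<close> (the \<open>n\<close> cyclic shifts of any permutation
  average to \<open>a\<close>), and an orthonormal basis \<open>U\<close> containing \<open>1 / \<surd>n\<close>. As \<open>\<parallel>X\<parallel>\<^sub>p\<^sup>p\<close>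
  dominates \<open>\<Sum>k. \<bar>(U\<^sup>T X W) k k\<bar>\<^sup>p\<close> for orthogonal \<open>U\<close> and \<open>W\<close>, take \<open>X = A - P\<^sub>\<sigma>\<close> and
  \<open>W = (2J - P\<^sub>\<sigma>\<^sup>T) U\<close>: one diagonal entry is \<open>a - 1\<close> and the others sum to \<open>n - 1 + a - t\<close>,
  so the tangent bound \<open>\<bar>x\<bar>\<^sup>p \<ge> 1 + p (x - 1)\<close> gives \<open>\<parallel>A - P\<^sub>\<sigma>\<parallel>\<^sub>p\<^sup>p \<ge> n - 1\<close>. If \<open>A \<noteq> J\<close>,
  one of these estimates is strict, for some permutation matrix or for \<open>B = I\<close>.\<close>

declare transpose_matrix_vector [simp del]

section \<open>Orthogonal matrices and the singular value decomposition\<close>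

definition matrix_of_cols :: "('n \<Rightarrow> real^'m) \<Rightarrow> real^'n^'m" where
  "matrix_of_cols f = (\<chi> i j. f j $ i)"

lemma column_matrix_of_cols [simp]: "column j (matrix_of_cols f) = f j"
  by (simp add: matrix_of_cols_def column_def vec_eq_iff)

lemma matrix_vector_mult_column_nth: "((M::real^'n^'m) *v column k N) $ i = (M ** N) $ i $ k"
  by (simp add: matrix_vector_mult_def column_def matrix_matrix_mult_def)

lemma column_matrix_mult: "column i ((M::real^'n^'m) ** N) = M *v column i N"
  by (simp add: vec_eq_iff matrix_vector_mult_column_nth) (simp add: column_def)

lemma matrix_vector_mult_uminus: "(A::real^'n^'m) *v (- x) = - (A *v x)"
  by (fact vec.neg)

lemma transpose_mult_mult_entry_sum:
  fixes U M W :: "real^'n^'n"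
  shows "(transpose U ** M ** W) $ i $ j = (\<Sum>k\<in>UNIV. \<Sum>l\<in>UNIV. U$k$i * M$k$l * W$l$j)"
proof -
  have "(transpose U ** M ** W) $ i $ j = (\<Sum>l\<in>UNIV. \<Sum>k\<in>UNIV. U$k$i * M$k$l * W$l$j)"
    by (simp add: matrix_matrix_mult_def transpose_def sum_distrib_right)
  also have "\<dots> = (\<Sum>k\<in>UNIV. \<Sum>l\<in>UNIV. U$k$i * M$k$l * W$l$j)"
    by (rule sum.swap)
  finally show ?thesis .
qed

lemma transpose_mult_mult_entry:
  fixes U M W :: "real^'n^'n"
  shows "(transpose U ** M ** W) $ i $ j = column i U \<bullet> (M *v column j W)"
  by (simp add: transpose_mult_mult_entry_sum inner_vec_def column_def matrix_vector_mult_def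
      sum_distrib_left mult.assoc)

lemma axis_inner_matrix_axis: "axis k 1 \<bullet> (B *v axis l 1) = (B :: real^'n^'m) $ k $ l"
  by (simp add: inner_axis') (simp add: matrix_vector_mult_def axis_def if_distrib cong: if_cong)

lemma sum_UNIV_remove_two:
  assumes "i \<noteq> j"
  shows "(\<Sum>k\<in>(UNIV::'n::finite set). f k) = f i + f j + (\<Sum>k\<in>UNIV-{i,j}. f k)"
proof -
  have "(\<Sum>k\<in>UNIV. f k) = f i + (\<Sum>k\<in>UNIV-{i}. f k)"
    by (simp add: sum.remove)
  also have "(\<Sum>k\<in>UNIV-{i}. f k) = f j + (\<Sum>k\<in>UNIV-{i}-{j}. f k)"
    using assms by (intro sum.remove) auto
  finally show ?thesis by (simp add: add.assoc Diff_insert2[symmetric])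
qed


definition givens :: "'n \<Rightarrow> 'n \<Rightarrow> real \<Rightarrow> real \<Rightarrow> real^'n^'n" where
  "givens i j c s = matrix_of_cols (\<lambda>k. if k = i then c *\<^sub>R axis i 1 + s *\<^sub>R axis j 1
      else if k = j then (-s) *\<^sub>R axis i 1 + c *\<^sub>R axis j 1 else axis k 1)"

lemma column_givens_first: "column i (givens i j c s) = c *\<^sub>R axis i 1 + s *\<^sub>R axis j 1"
  by (simp add: givens_def)

lemma column_givens_second:
  "i \<noteq> j \<Longrightarrow> column j (givens i j c s) = (-s) *\<^sub>R axis i 1 + c *\<^sub>R axis j 1"
  by (simp add: givens_def)

lemma column_givens_other: "k \<noteq> i \<Longrightarrow> k \<noteq> j \<Longrightarrow> column k (givens i j c s) = axis k 1"
  by (simp add: givens_def)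

lemma orthogonal_matrix_givens:
  fixes i j :: "'n::finite"
  assumes ij: "i \<noteq> j" and cs: "c^2 + s^2 = 1"
  shows "orthogonal_matrix (givens i j c s)"
proof -
  have unit: "norm (x *\<^sub>R axis i 1 + y *\<^sub>R axis j (1::real)) = 1" if "x^2 + y^2 = 1" for x y
    using that ij by (simp add: norm_eq_1 inner_add_left inner_add_right inner_axis_axis power2_eq_square)
  show ?thesis
    unfolding orthogonal_matrix_orthonormal_columns orthogonal_def
  proof (intro conjI allI impI)
    fix k
    show "norm (column k (givens i j c s)) = 1"
      using unit[of c s] unit[of "-s" c] cs
      by (cases "k = i"; cases "k = j")
        (simp_all add: column_givens_first column_givens_second column_givens_other ij add.commute)
  next
    fix k l :: 'n assume "k \<noteq> l"
    then show "column k (givens i j c s) \<bullet> column l (givens i j c s) = 0"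
      using ij by (cases "k = i"; cases "k = j"; cases "l = i"; cases "l = j")
        (simp_all add: column_givens_first column_givens_second column_givens_other
          inner_add_left inner_add_right inner_diff_left inner_diff_right inner_axis_axis)
  qed
qed

lemma inner_axis_pair_matrix_axis_pair:
  fixes B :: "real^'n^'n"
  shows "(x *\<^sub>R axis a 1 + y *\<^sub>R axis b 1) \<bullet> (B *v (z *\<^sub>R axis c 1 + w *\<^sub>R axis d 1))
    = x*z*(B$a$c) + x*w*(B$a$d) + y*z*(B$b$c) + y*w*(B$b$d)"
  by (simp only: matrix_vector_right_distrib matrix_vector_mult_scaleR inner_add_left
      inner_add_right inner_scaleR_left inner_scaleR_right axis_inner_matrix_axis)
    (simp add: algebra_simps)

lemma givens_conj_diag_other:
  fixes B :: "real^'n^'n"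
  shows "k \<noteq> i \<Longrightarrow> k \<noteq> j \<Longrightarrow>
    (transpose (givens i j p1 q1) ** B ** givens i j p2 q2) $ k $ k = B $ k $ k"
  by (simp only: transpose_mult_mult_entry column_givens_other axis_inner_matrix_axis not_False_eq_True)

lemma givens_conj_diag_first:
  fixes B :: "real^'n^'n"
  shows "(transpose (givens i j p1 q1) ** B ** givens i j p2 q2) $ i $ i =
    p1 * p2 * (B$i$i) + p1 * q2 * (B$i$j) + q1 * p2 * (B$j$i) + q1 * q2 * (B$j$j)"
  by (simp only: transpose_mult_mult_entry column_givens_first inner_axis_pair_matrix_axis_pair)

lemma givens_conj_diag_second:
  fixes B :: "real^'n^'n"
  shows "i \<noteq> j \<Longrightarrow> (transpose (givens i j p1 q1) ** B ** givens i j p2 q2) $ j $ j =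
    q1 * q2 * (B$i$i) - q1 * p2 * (B$i$j) - p1 * q2 * (B$j$i) + p1 * p2 * (B$j$j)"
  by (simp only: transpose_mult_mult_entry column_givens_second inner_axis_pair_matrix_axis_pair
      not_False_eq_True)

lemma exists_unit_orthogonal:
  fixes u v :: real
  shows "\<exists>x y. x^2 + y^2 = 1 \<and> x * u + y * v = 0"
proof (cases "u^2 + v^2 = 0")
  case True
  then show ?thesis by (intro exI[of _ 1] exI[of _ 0]) simp
next
  case False
  define r where "r = sqrt (u^2 + v^2)"
  have "0 < u^2 + v^2" using False by (metis add_nonneg_nonneg zero_le_power2 order_le_less)
  then have "r > 0" by (simp add: r_def)
  moreover have "r^2 = u^2 + v^2" unfolding r_def by simp
  ultimately have "(v / r)^2 + (- u / r)^2 = 1"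
    using False by (simp add: power_divide add_divide_distrib[symmetric] add.commute)
  moreover have "v / r * u + - u / r * v = 0" by (simp add: algebra_simps)
  ultimately show ?thesis by blast
qed

lemma exists_rotation_annihilating:
  fixes e m :: real
  shows "\<exists>c s. c^2 + s^2 = 1 \<and> c * s * e + (c^2 - s^2) * m = 0"
proof -
  let ?f = "\<lambda>t. cos t * sin t * e + ((cos t)^2 - (sin t)^2) * m"
  have cont: "\<forall>x. 0 \<le> x \<and> x \<le> pi/2 \<longrightarrow> isCont ?f x"
    by (intro allI impI continuous_intros)
  have "?f 0 = m" and "?f (pi/2) = -m" by simp_all
  then have "\<exists>t. 0 \<le> t \<and> t \<le> pi/2 \<and> ?f t = 0"
    using IVT2[of ?f "pi/2" 0 0] IVT[of ?f 0 0 "pi/2"] cont by (cases "m \<ge> 0") auto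
  then obtain t where "?f t = 0" by blast
  then show ?thesis by (intro exI[of _ "cos t"] exI[of _ "sin t"]) simp
qed

text \<open>The two expressions are the off-diagonal entries of \<open>R(p1,q1)\<^sup>T [[a, b], [c, d]] R(p2,q2)\<close>
  for plane rotations \<open>R\<close>: the first rotation makes the matrix symmetric, the second one
  diagonalises it.\<close>
lemma exists_two_sided_rotation:
  fixes a b c d :: real
  shows "\<exists>p1 q1 p2 q2. p1^2 + q1^2 = 1 \<and> p2^2 + q2^2 = 1 \<and>
    -p1 * q2 * a + p1 * p2 * b - q1 * q2 * c + q1 * p2 * d = 0 \<and>
    -q1 * p2 * a - q1 * q2 * b + p1 * p2 * c + p1 * q2 * d = 0"
proof -
  obtain x y where xy: "x^2 + y^2 = 1" "x * (b - c) + y * (a + d) = 0"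
    using exists_unit_orthogonal by blast
  obtain co si where cs: "co^2 + si^2 = 1"
    "co * si * ((-y * b + x * d) - (x * a + y * c)) + (co^2 - si^2) * (x * b + y * d) = 0"
    using exists_rotation_annihilating by blast
  show ?thesis
  proof (intro exI conjI)
    have "(x * co - y * si)^2 + (y * co + x * si)^2 = (x^2 + y^2) * (co^2 + si^2)"
      by algebra
    then show "(x * co - y * si)^2 + (y * co + x * si)^2 = 1" using xy cs by simp
    show "co^2 + si^2 = 1" by fact
    show "-(x * co - y * si) * si * a + (x * co - y * si) * co * b
        - (y * co + x * si) * si * c + (y * co + x * si) * co * d = 0"
      using xy cs by algebra
    show "-(y * co + x * si) * co * a - (y * co + x * si) * si * b
        + (x * co - y * si) * co * c + (x * co - y * si) * si * d = 0"
      using xy cs by algebra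
  qed
qed

lemma rotation_pair_sum_squares:
  assumes "p1^2 + q1^2 = (1::real)" "p2^2 + q2^2 = 1"
  shows "(p1 * p2 * a + p1 * q2 * b + q1 * p2 * c + q1 * q2 * d)^2
    + (-p1 * q2 * a + p1 * p2 * b - q1 * q2 * c + q1 * p2 * d)^2
    + (-q1 * p2 * a - q1 * q2 * b + p1 * p2 * c + p1 * q2 * d)^2
    + (q1 * q2 * a - q1 * p2 * b - p1 * q2 * c + p1 * p2 * d)^2 = a^2 + b^2 + c^2 + d^2"
proof -
  have "(p1 * p2 * a + p1 * q2 * b + q1 * p2 * c + q1 * q2 * d)^2
    + (-p1 * q2 * a + p1 * p2 * b - q1 * q2 * c + q1 * p2 * d)^2
    + (-q1 * p2 * a - q1 * q2 * b + p1 * p2 * c + p1 * q2 * d)^2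
    + (q1 * q2 * a - q1 * p2 * b - p1 * q2 * c + p1 * p2 * d)^2
    = (p1^2 + q1^2) * (p2^2 + q2^2) * (a^2 + b^2 + c^2 + d^2)" by algebra
  then show ?thesis using assms by simp
qed

definition diag_energy :: "real^'n^'n \<Rightarrow> (real^'n^'n) \<times> (real^'n^'n) \<Rightarrow> real" where
  "diag_energy A UV = (\<Sum>i\<in>UNIV. ((transpose (fst UV) ** A ** snd UV) $ i $ i)^2)"

lemma continuous_on_diag_energy: "continuous_on S (diag_energy A)"
  unfolding diag_energy_def transpose_mult_mult_entry_sum by (intro continuous_intros)

lemma compact_orthogonal_matrices: "compact {U :: real^'n^'n. orthogonal_matrix U}"
proof (rule compact_eq_bounded_closed[THEN iffD2], rule conjI)
  show "bounded {U :: real^'n^'n. orthogonal_matrix U}"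
  proof (rule boundedI)
    fix U :: "real^'n^'n" assume "U \<in> {U. orthogonal_matrix U}"
    then have "norm (U $ i) = 1" for i
      by (metis mem_Collect_eq orthogonal_matrix_orthonormal_rows row_def vec_lambda_eta)
    moreover have "norm U \<le> (\<Sum>i\<in>UNIV. norm (U $ i))"
      unfolding norm_vec_def by (rule L2_set_le_sum) auto
    ultimately show "norm U \<le> real CARD('n)" by simp
  qed
  have "{U :: real^'n^'n. orthogonal_matrix U} =
      {U. \<forall>i j. (\<Sum>k\<in>UNIV. U$k$i * U$k$j) = (if i = j then 1 else 0)}"
    by (auto simp: orthogonal_matrix matrix_matrix_mult_def transpose_def mat_def vec_eq_iff)
  then show "closed {U :: real^'n^'n. orthogonal_matrix U}"
    by (simp only:) (intro closed_Collect_all closed_Collect_eq continuous_intros)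
qed

lemma diag_energy_increase:
  fixes A U V :: "real^'n^'n"
  assumes U: "orthogonal_matrix U" and V: "orthogonal_matrix V" and ij: "i \<noteq> j"
    and nz: "(transpose U ** A ** V) $ i $ j \<noteq> 0"
  shows "\<exists>U' V'. orthogonal_matrix U' \<and> orthogonal_matrix V' \<and>
    diag_energy A (U, V) < diag_energy A (U', V')"
proof -
  define B where "B = transpose U ** A ** V"
  obtain p1 q1 p2 q2 where pq: "p1^2 + q1^2 = 1" "p2^2 + q2^2 = 1"
    "-p1 * q2 * (B$i$i) + p1 * p2 * (B$i$j) - q1 * q2 * (B$j$i) + q1 * p2 * (B$j$j) = 0"
    "-q1 * p2 * (B$i$i) - q1 * q2 * (B$i$j) + p1 * p2 * (B$j$i) + p1 * q2 * (B$j$j) = 0"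
    using exists_two_sided_rotation by blast
  define U' where "U' = U ** givens i j p1 q1"
  define V' where "V' = V ** givens i j p2 q2"
  define T where "T = transpose (givens i j p1 q1) ** B ** givens i j p2 q2"
  have orth: "orthogonal_matrix U'" "orthogonal_matrix V'"
    unfolding U'_def V'_def using U V orthogonal_matrix_givens[OF ij] pq(1,2)
    by (simp_all add: orthogonal_matrix_mul)
  have T: "transpose U' ** A ** V' = T"
    by (simp add: T_def B_def U'_def V'_def matrix_transpose_mul matrix_mul_assoc)
  have Tij: "(T$i$i)^2 + (T$j$j)^2 = (B$i$i)^2 + (B$i$j)^2 + (B$j$i)^2 + (B$j$j)^2"
    using rotation_pair_sum_squares[OF pq(1,2), of "B$i$i" "B$i$j" "B$j$i" "B$j$j"] pq(3,4)
    unfolding T_def givens_conj_diag_first givens_conj_diag_second[OF ij] by simp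
  have Tk: "T $ k $ k = B $ k $ k" if "k \<noteq> i" "k \<noteq> j" for k
    unfolding T_def using that by (rule givens_conj_diag_other)
  have pos: "0 < (B$i$j)^2 + (B$j$i)^2" using nz by (simp add: B_def sum_power2_gt_zero_iff)
  have "diag_energy A (U, V) = (B$i$i)^2 + (B$j$j)^2 + (\<Sum>k\<in>UNIV-{i,j}. (B$k$k)^2)"
    unfolding diag_energy_def B_def by (simp add: sum_UNIV_remove_two[OF ij])
  also have "\<dots> < (T$i$i)^2 + (T$j$j)^2 + (\<Sum>k\<in>UNIV-{i,j}. (T$k$k)^2)"
    using Tij Tk pos by simp
  also have "\<dots> = diag_energy A (U', V')"
    unfolding diag_energy_def using T by (simp add: sum_UNIV_remove_two[OF ij])
  finally show ?thesis using orth by blast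
qed

lemma diag_mat_mult: "diag_mat a ** diag_mat b = (diag_mat (\<lambda>k. a k * b k) :: real^'n^'n)"
  by (simp add: diag_mat_def matrix_matrix_mult_def vec_eq_iff if_distrib[of "\<lambda>x. x * _"]
      cong: if_cong)

lemma transpose_diag_mat: "transpose (diag_mat a) = (diag_mat a :: real^'n^'n)"
  by (simp add: diag_mat_def transpose_def vec_eq_iff)

lemma diag_mat_one: "diag_mat (\<lambda>k. 1) = (mat 1 :: real^'n^'n)"
  by (simp add: diag_mat_def mat_def vec_eq_iff)

lemma matrix_mult_diag_mat_nth: "((M::real^'n^'m) ** diag_mat s) $ i $ k = M$i$k * s k"
proof -
  have "(M ** diag_mat s)$i$k = (\<Sum>l\<in>UNIV. if l = k then M$i$l * s l else 0)"
    by (simp add: matrix_matrix_mult_def diag_mat_def if_distrib[of "\<lambda>x. _ * x"] cong: if_cong)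
  then show ?thesis by simp
qed

text \<open>A maximiser of the diagonal energy over pairs of orthogonal matrices diagonalises \<open>A\<close>;
  the signs of the diagonal are then absorbed into \<open>U\<close>.\<close>
lemma exists_svd:
  fixes A :: "real^'n^'n"
  shows "\<exists>s U V. (\<forall>i. s i \<ge> 0) \<and> orthogonal_matrix U \<and> orthogonal_matrix V \<and>
             A = U ** diag_mat s ** transpose V"
proof -
  let ?O = "{U :: real^'n^'n. orthogonal_matrix U}"
  have "compact (?O \<times> ?O)" by (intro compact_Times compact_orthogonal_matrices)
  moreover have "?O \<times> ?O \<noteq> {}" using orthogonal_matrix_id by blast
  ultimately obtain U V where UV: "(U, V) \<in> ?O \<times> ?O"
    and max: "\<And>y. y \<in> ?O \<times> ?O \<Longrightarrow> diag_energy A y \<le> diag_energy A (U, V)"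
    using continuous_attains_sup[OF _ _ continuous_on_diag_energy] by (metis surj_pair)
  have U: "orthogonal_matrix U" and V: "orthogonal_matrix V" using UV by auto
  define b where "b k = (transpose U ** A ** V) $ k $ k" for k
  have "(transpose U ** A ** V) $ i $ j = 0" if ij: "i \<noteq> j" for i j
  proof (rule ccontr)
    assume "(transpose U ** A ** V) $ i $ j \<noteq> 0"
    then obtain U' V' where "orthogonal_matrix U'" "orthogonal_matrix V'"
      "diag_energy A (U, V) < diag_energy A (U', V')"
      using diag_energy_increase[OF U V ij] by blast
    then show False using max[of "(U', V')"] by simp
  qed
  then have diag: "transpose U ** A ** V = diag_mat b"
    by (auto simp: diag_mat_def b_def vec_eq_iff)
  have "A = (U ** transpose U) ** A ** (V ** transpose V)"
    using U V by (simp add: orthogonal_matrix_def)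
  then have A: "A = U ** diag_mat b ** transpose V"
    by (simp add: diag[symmetric] matrix_mul_assoc)
  define sg where "sg k = (if b k < 0 then -1 else (1::real))" for k
  have "diag_mat b = diag_mat sg ** diag_mat (\<lambda>k. \<bar>b k\<bar>)"
    unfolding diag_mat_mult by (rule arg_cong[where f=diag_mat]) (auto simp: sg_def)
  then have "A = (U ** diag_mat sg) ** diag_mat (\<lambda>k. \<bar>b k\<bar>) ** transpose V"
    using A by (simp add: matrix_mul_assoc)
  moreover have "orthogonal_matrix (diag_mat sg :: real^'n^'n)"
    unfolding orthogonal_matrix transpose_diag_mat diag_mat_mult
    by (subst diag_mat_one[symmetric], rule arg_cong[where f=diag_mat]) (auto simp: sg_def)
  then have "orthogonal_matrix (U ** diag_mat sg)" using U by (simp add: orthogonal_matrix_mul)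
  ultimately show ?thesis
    using V by (intro exI[of _ "\<lambda>k. \<bar>b k\<bar>"] exI[of _ "U ** diag_mat sg"] exI[of _ V]) simp
qed

lemma singular_values_spec:
  fixes A :: "real^'n^'n"
  shows "(\<forall>i. singular_values A i \<ge> 0) \<and> (\<exists>U V. orthogonal_matrix U \<and> orthogonal_matrix V \<and>
      A = U ** diag_mat (singular_values A) ** transpose V)"
proof -
  have "\<exists>s. (\<forall>i. s i \<ge> 0) \<and> (\<exists>U V. orthogonal_matrix U \<and> orthogonal_matrix V \<and>
      A = U ** diag_mat s ** transpose V)" using exists_svd[of A] by blast
  then show ?thesis unfolding singular_values_def by (rule someI_ex)
qed

lemma singular_values_svd:
  fixes A :: "real^'n^'n"
  obtains U V where "orthogonal_matrix U" "orthogonal_matrix V"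
    "A = U ** diag_mat (singular_values A) ** transpose V"
  using singular_values_spec[of A] by blast

lemma singular_values_nonneg: "singular_values A k \<ge> 0"
  using singular_values_spec[of A] by blast

section \<open>Diagonals of orthogonal conjugates are dominated by singular values\<close>

lemma convex_on_powr_nonneg:
  assumes p: "p \<ge> 1"
  shows "convex_on {0..} (\<lambda>x::real. x powr p)"
  unfolding convex_on_def
proof (intro conjI ballI allI impI)
  show "convex {0::real..}" by simp
  fix x y u v :: real assume x: "x \<in> {0..}" and y: "y \<in> {0..}" and uv: "0 \<le> u" "0 \<le> v" "u + v = 1"
  have scale: "(v * y) powr p \<le> v * y powr p" if "0 \<le> v" "v \<le> 1" "0 \<le> y" for v y :: real
  proof -
    have "v powr p \<le> v powr 1" using that p by (intro powr_mono') auto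
    then have "v powr p * y powr p \<le> v * y powr p" using that by (intro mult_right_mono) auto
    then show ?thesis using that by (simp add: powr_mult)
  qed
  show "(u *\<^sub>R x + v *\<^sub>R y) powr p \<le> u * x powr p + v * y powr p"
  proof (cases "x = 0 \<or> y = 0")
    case True
    then show ?thesis using scale[of v y] scale[of u x] uv x y p by auto
  next
    case False
    then have "x \<in> {0<..}" "y \<in> {0<..}" using x y by auto
    moreover have u: "u = 1 - v" and "v \<le> 1" using uv by auto
    ultimately show ?thesis using convex_onD[OF powr_convex[OF p], of v x y] uv unfolding u by simp
  qed
qed

lemma powr_weighted_sum_le:
  fixes m s :: "'a \<Rightarrow> real"
  assumes I: "finite I" and m: "\<And>k. k \<in> I \<Longrightarrow> m k \<ge> 0" and M: "(\<Sum>k\<in>I. m k) \<le> 1"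
    and s: "\<And>k. k \<in> I \<Longrightarrow> s k \<ge> 0" and p: "p \<ge> 1"
  shows "(\<Sum>k\<in>I. m k * s k) powr p \<le> (\<Sum>k\<in>I. m k * s k powr p)"
proof (cases "(\<Sum>k\<in>I. m k) = 0")
  case True
  then have "\<forall>k\<in>I. m k = 0" using sum_nonneg_eq_0_iff[OF I] m by blast
  then show ?thesis by simp
next
  case False
  define M where "M = (\<Sum>k\<in>I. m k)"
  have M0: "M > 0" using False m M_def by (metis order_le_less sum_nonneg)
  have "I \<noteq> {}" using False by auto
  then have "(\<lambda>x. x powr p) (\<Sum>k\<in>I. (m k / M) *\<^sub>R s k) \<le> (\<Sum>k\<in>I. (m k / M) * (\<lambda>x. x powr p) (s k))"
    using M0 m s
    by (intro convex_on_sum[OF I _ convex_on_powr_nonneg[OF p]])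
      (auto simp: M_def sum_divide_distrib[symmetric])
  then have jensen: "((\<Sum>k\<in>I. m k * s k) / M) powr p \<le> (\<Sum>k\<in>I. m k * s k powr p) / M"
    by (simp add: sum_divide_distrib)
  have "(\<Sum>k\<in>I. m k * s k) powr p = M powr p * ((\<Sum>k\<in>I. m k * s k) / M) powr p"
    using M0 m s by (subst powr_mult[symmetric]) (auto intro!: sum_nonneg)
  also have "\<dots> \<le> M powr p * ((\<Sum>k\<in>I. m k * s k powr p) / M)"
    using jensen by (intro mult_left_mono) auto
  also have "\<dots> = M powr (p - 1) * (\<Sum>k\<in>I. m k * s k powr p)"
    using M0 by (simp add: powr_diff field_simps)
  also have "\<dots> \<le> 1 * (\<Sum>k\<in>I. m k * s k powr p)"
    using M0 M p m by (intro mult_right_mono powr_le1 sum_nonneg) (auto simp: M_def)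
  finally show ?thesis by simp
qed

lemma orthogonal_matrix_column_sum_squares:
  fixes Q :: "real^'n^'n"
  assumes "orthogonal_matrix Q"
  shows "(\<Sum>k\<in>UNIV. (Q$k$i)^2) = 1"
proof -
  have "(transpose Q ** Q) $ i $ i = 1" using assms by (simp add: orthogonal_matrix_def mat_def)
  then show ?thesis by (simp add: matrix_matrix_mult_def transpose_def power2_eq_square)
qed

lemma orthogonal_matrix_row_sum_squares:
  fixes Q :: "real^'n^'n"
  assumes "orthogonal_matrix Q"
  shows "(\<Sum>k\<in>UNIV. (Q$i$k)^2) = 1"
proof -
  have "(Q ** transpose Q) $ i $ i = 1" using assms by (simp add: orthogonal_matrix_def mat_def)
  then show ?thesis by (simp add: matrix_matrix_mult_def transpose_def power2_eq_square)
qed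

lemma sum_abs_mult_le_one:
  fixes a b :: "'a \<Rightarrow> real"
  assumes "finite I" "(\<Sum>k\<in>I. (a k)^2) = 1" "(\<Sum>k\<in>I. (b k)^2) = 1"
  shows "(\<Sum>k\<in>I. \<bar>a k\<bar> * \<bar>b k\<bar>) \<le> 1"
proof -
  have "\<bar>a k\<bar> * \<bar>b k\<bar> \<le> ((a k)^2 + (b k)^2) / 2" for k
    using sum_squares_bound[of "\<bar>a k\<bar>" "\<bar>b k\<bar>"] by simp
  then have "(\<Sum>k\<in>I. \<bar>a k\<bar> * \<bar>b k\<bar>) \<le> (\<Sum>k\<in>I. ((a k)^2 + (b k)^2) / 2)"
    by (intro sum_mono)
  also have "\<dots> = 1" using assms by (simp add: sum_divide_distrib[symmetric] sum.distrib)
  finally show ?thesis .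
qed

text \<open>The weights \<open>\<bar>O1$i$k\<bar> * \<bar>O2$k$i\<bar>\<close> form a doubly substochastic matrix, so Jensen's
  inequality applies row by row.\<close>
lemma diag_powr_sum_le:
  fixes O1 O2 :: "real^'n^'n"
  assumes p: "p \<ge> 1" and s: "\<forall>k. s k \<ge> 0"
    and O1: "orthogonal_matrix O1" and O2: "orthogonal_matrix O2"
  shows "(\<Sum>i\<in>UNIV. \<bar>(O1 ** diag_mat s ** O2)$i$i\<bar> powr p) \<le> (\<Sum>k\<in>UNIV. s k powr p)"
proof -
  define m where "m i k = \<bar>O1$i$k\<bar> * \<bar>O2$k$i\<bar>" for i k
  have row: "(\<Sum>k\<in>UNIV. m i k) \<le> 1" for i
    unfolding m_def by (rule sum_abs_mult_le_one)
      (simp_all add: orthogonal_matrix_row_sum_squares[OF O1] orthogonal_matrix_column_sum_squares[OF O2])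
  have col: "(\<Sum>i\<in>UNIV. m i k) \<le> 1" for k
    unfolding m_def by (rule sum_abs_mult_le_one)
      (simp_all add: orthogonal_matrix_column_sum_squares[OF O1] orthogonal_matrix_row_sum_squares[OF O2])
  have entry: "\<bar>(O1 ** diag_mat s ** O2)$i$i\<bar> \<le> (\<Sum>k\<in>UNIV. m i k * s k)" for i
  proof -
    have "\<bar>(O1 ** diag_mat s ** O2)$i$i\<bar> \<le> (\<Sum>k\<in>UNIV. \<bar>O1$i$k * s k * O2$k$i\<bar>)"
      unfolding matrix_matrix_mult_def[of "O1 ** diag_mat s" O2]
      by (simp add: matrix_mult_diag_mat_nth)
    also have "\<dots> = (\<Sum>k\<in>UNIV. m i k * s k)"
      using s by (intro sum.cong) (auto simp: m_def abs_mult)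
    finally show ?thesis .
  qed
  have "(\<Sum>i\<in>UNIV. \<bar>(O1 ** diag_mat s ** O2)$i$i\<bar> powr p) \<le> (\<Sum>i\<in>UNIV. (\<Sum>k\<in>UNIV. m i k * s k) powr p)"
    using entry p by (intro sum_mono powr_mono2) auto
  also have "\<dots> \<le> (\<Sum>i\<in>UNIV. \<Sum>k\<in>UNIV. m i k * s k powr p)"
    using row s p by (intro sum_mono powr_weighted_sum_le) (auto simp: m_def)
  also have "\<dots> = (\<Sum>k\<in>UNIV. s k powr p * (\<Sum>i\<in>UNIV. m i k))"
    by (subst sum.swap) (simp add: sum_distrib_left mult.commute)
  also have "\<dots> \<le> (\<Sum>k\<in>UNIV. s k powr p * 1)"
    using col by (intro sum_mono mult_left_mono) auto
  finally show ?thesis by simp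
qed

lemma diag_powr_sum_le_singular_values:
  fixes X U W :: "real^'n^'n"
  assumes p: "p \<ge> 1" and U: "orthogonal_matrix U" and W: "orthogonal_matrix W"
  shows "(\<Sum>i\<in>UNIV. \<bar>(transpose U ** X ** W)$i$i\<bar> powr p) \<le> (\<Sum>k\<in>UNIV. singular_values X k powr p)"
proof -
  obtain U0 V0 where U0: "orthogonal_matrix U0" and V0: "orthogonal_matrix V0"
    and X: "X = U0 ** diag_mat (singular_values X) ** transpose V0"
    by (rule singular_values_svd)
  have e: "transpose U ** X ** W =
      (transpose U ** U0) ** diag_mat (singular_values X) ** (transpose V0 ** W)"
    by (subst X) (simp add: matrix_mul_assoc)
  have "orthogonal_matrix (transpose U ** U0)" "orthogonal_matrix (transpose V0 ** W)"
    using U U0 V0 W by (simp_all add: orthogonal_matrix_mul)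
  then show ?thesis
    unfolding e using singular_values_nonneg by (intro diag_powr_sum_le[OF p]) auto
qed

section \<open>The upper bound: singular values of \<open>J - B\<close>\<close>

lemma svd_mult_column:
  fixes X U V :: "real^'n^'n"
  assumes V: "orthogonal_matrix V" and X: "X = U ** diag_mat s ** transpose V"
  shows "X *v column k V = s k *\<^sub>R column k U"
proof -
  have "X ** V = U ** diag_mat s ** (transpose V ** V)" unfolding X by (simp add: matrix_mul_assoc)
  also have "\<dots> = U ** diag_mat s" using V by (simp add: orthogonal_matrix_def)
  finally show ?thesis
    by (simp add: vec_eq_iff matrix_vector_mult_column_nth matrix_mult_diag_mat_nth)
      (simp add: column_def mult.commute)
qed

lemma svd_value_eq_norm:
  fixes X U V :: "real^'n^'n"
  assumes U: "orthogonal_matrix U" and V: "orthogonal_matrix V" and s: "s k \<ge> 0"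
    and X: "X = U ** diag_mat s ** transpose V"
  shows "s k = norm (X *v column k V)"
  using svd_mult_column[OF V X] U s by (simp add: orthogonal_matrix_orthonormal_columns)

lemma svd_value_zero:
  fixes X U V :: "real^'n^'n"
  assumes U: "orthogonal_matrix U" and V: "orthogonal_matrix V"
    and X: "X = U ** diag_mat s ** transpose V" and "X *v x = 0" "x \<noteq> 0"
  shows "\<exists>k. s k = 0"
proof -
  have "\<not> invertible X"
  proof
    assume "invertible X"
    then obtain X' where "X' ** X = mat 1" by (auto simp: invertible_def)
    then have "x = X' *v (X *v x)" by (simp add: matrix_vector_mul_assoc)
    then show False using assms(4,5) by simp
  qed
  then have "det X = 0" by (simp add: invertible_det_nz)
  moreover have "det X = det U * (\<Prod>k\<in>UNIV. s k) * det V"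
    by (simp add: X det_mul det_diagonal diag_mat_def)
  moreover have "det U \<noteq> 0" "det V \<noteq> 0"
    using det_orthogonal_matrix[OF U] det_orthogonal_matrix[OF V] by auto
  ultimately show ?thesis by simp
qed

lemma singular_value_le_entry_sum:
  fixes X :: "real^'n^'n"
  shows "singular_values X k \<le> (\<Sum>i\<in>UNIV. \<Sum>j\<in>UNIV. \<bar>X$i$j\<bar>)"
proof -
  obtain U V where U: "orthogonal_matrix U" and V: "orthogonal_matrix V"
    and X: "X = U ** diag_mat (singular_values X) ** transpose V"
    by (rule singular_values_svd)
  define v where "v = column k V"
  have v: "\<bar>v$j\<bar> \<le> 1" for j
    using component_le_norm_cart[of v j] V by (simp add: v_def orthogonal_matrix_orthonormal_columns)
  have "singular_values X k = norm (X *v v)"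
    unfolding v_def by (rule svd_value_eq_norm[OF U V singular_values_nonneg X])
  also have "\<dots> \<le> (\<Sum>i\<in>UNIV. \<bar>(X *v v)$i\<bar>)" by (rule norm_le_l1_cart)
  also have "\<dots> \<le> (\<Sum>i\<in>UNIV. \<Sum>j\<in>UNIV. \<bar>X$i$j * v$j\<bar>)"
    unfolding matrix_vector_mult_def by (intro sum_mono) simp
  also have "\<dots> \<le> (\<Sum>i\<in>UNIV. \<Sum>j\<in>UNIV. \<bar>X$i$j\<bar>)"
    using v by (intro sum_mono) (simp add: abs_mult mult_left_le)
  finally show ?thesis .
qed

definition ones :: "real^'n" where "ones = (\<chi> i. 1)"

lemma ones_nth [simp]: "(ones::real^'n) $ i = 1"
  by (simp add: ones_def)

lemma ones_nonzero: "(ones :: real^'n) \<noteq> 0"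
  by (simp add: vec_eq_iff)

lemma doubly_stochastic_entry_bounds:
  assumes "B \<in> doubly_stochastic"
  shows "0 \<le> B $ i $ j" "B $ i $ j \<le> 1"
proof -
  show "0 \<le> B $ i $ j" using assms by (simp add: doubly_stochastic_def)
  have "B $ i $ j \<le> (\<Sum>j\<in>UNIV. B $ i $ j)"
    using assms by (intro member_le_sum) (auto simp: doubly_stochastic_def)
  then show "B $ i $ j \<le> 1" using assms by (simp add: doubly_stochastic_def)
qed

lemma norm_power2_vec: "(norm (x::real^'n))^2 = (\<Sum>i\<in>UNIV. (x$i)^2)"
proof -
  have "(norm x)^2 = x \<bullet> x" by (simp add: dot_square_norm)
  then show ?thesis by (simp add: inner_vec_def power2_eq_square)
qed

lemma doubly_stochastic_norm_le:
  fixes B :: "real^'n^'n"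
  assumes B: "B \<in> doubly_stochastic"
  shows "norm (B *v y) \<le> norm y"
proof -
  have rows: "(\<Sum>j\<in>UNIV. B$i$j) = 1" for i using B by (simp add: doubly_stochastic_def)
  have cols: "(\<Sum>i\<in>UNIV. B$i$j) = 1" for j using B by (simp add: doubly_stochastic_def)
  have nonneg: "B$i$j \<ge> 0" for i j using B by (simp add: doubly_stochastic_def)
  have "(norm (B *v y))^2 = (\<Sum>i\<in>UNIV. (\<Sum>j\<in>UNIV. B$i$j * y$j)^2)"
    by (simp add: norm_power2_vec matrix_vector_mult_def)
  also have "\<dots> \<le> (\<Sum>i\<in>UNIV. \<Sum>j\<in>UNIV. B$i$j * (y$j)^2)"
    using convex_on_sum[OF finite_class.finite_UNIV UNIV_not_empty convex_power2, of "\<lambda>j. B$_$j"]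
      rows nonneg by (intro sum_mono) simp
  also have "\<dots> = (\<Sum>j\<in>UNIV. (y$j)^2 * (\<Sum>i\<in>UNIV. B$i$j))"
    by (subst sum.swap) (simp add: sum_distrib_left mult.commute)
  also have "\<dots> = (norm y)^2" by (simp add: cols norm_power2_vec)
  finally show ?thesis by (simp add: power2_le_iff_abs_le)
qed

lemma norm_minus_mean_le:
  fixes x :: "real^'n"
  shows "norm (x - ((\<Sum>i\<in>UNIV. x$i) / real CARD('n)) *\<^sub>R ones) \<le> norm x"
proof -
  define \<mu> where "\<mu> = (\<Sum>i\<in>UNIV. x$i) / real CARD('n)"
  have sum: "(\<Sum>i\<in>UNIV. x$i) = real CARD('n) * \<mu>" by (simp add: \<mu>_def)
  have "(norm (x - \<mu> *\<^sub>R ones))^2 = (\<Sum>i\<in>UNIV. (x$i)^2 - 2 * \<mu> * x$i + \<mu>^2)"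
    by (subst norm_power2_vec) (simp add: power2_eq_square algebra_simps)
  also have "\<dots> = (\<Sum>i\<in>UNIV. (x$i)^2) - real CARD('n) * \<mu>^2"
    by (simp add: sum.distrib sum_subtractf sum_distrib_left[symmetric] sum power2_eq_square)
  also have "\<dots> \<le> (norm x)^2" by (simp add: norm_power2_vec)
  finally show ?thesis unfolding \<mu>_def by (simp add: power2_le_iff_abs_le)
qed

text \<open>On every vector, \<open>J - B\<close> acts as \<open>-B\<close> applied to the vector with its mean removed.\<close>
lemma Jmat_minus_doubly_stochastic_norm_le:
  fixes B :: "real^'n^'n"
  assumes B: "B \<in> doubly_stochastic"
  shows "norm ((Jmat - B) *v x) \<le> norm x"
proof -
  define \<mu> where "\<mu> = (\<Sum>i\<in>UNIV. x$i) / real CARD('n)"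
  have rows: "(\<Sum>j\<in>UNIV. B$i$j) = 1" for i using B by (simp add: doubly_stochastic_def)
  have "(B *v (x - \<mu> *\<^sub>R ones)) $ i = (B *v x) $ i - \<mu>" for i
    using rows[of i] by (simp add: matrix_vector_mult_def algebra_simps sum_subtractf
        sum_distrib_left[symmetric])
  moreover have "((Jmat - B) *v x) $ i = \<mu> - (B *v x) $ i" for i
    by (simp add: matrix_vector_mult_def Jmat_def \<mu>_def sum_subtractf algebra_simps
        sum_divide_distrib)
  ultimately have "(Jmat - B) *v x = - (B *v (x - \<mu> *\<^sub>R ones))" by (simp add: vec_eq_iff)
  then have "norm ((Jmat - B) *v x) = norm (B *v (x - \<mu> *\<^sub>R ones))" by simp
  also have "\<dots> \<le> norm (x - \<mu> *\<^sub>R ones)" by (rule doubly_stochastic_norm_le[OF B])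
  also have "\<dots> \<le> norm x" unfolding \<mu>_def by (rule norm_minus_mean_le)
  finally show ?thesis .
qed

lemma Jmat_minus_doubly_stochastic_ones:
  "B \<in> doubly_stochastic \<Longrightarrow> (Jmat - B) *v ones = (0::real^'n)"
  by (simp add: doubly_stochastic_def vec_eq_iff matrix_vector_mult_def Jmat_def sum_subtractf)

text \<open>All singular values of \<open>J - B\<close> are at most \<open>1\<close>, and one of them vanishes because
  \<open>J - B\<close> kills the all-ones vector.\<close>
lemma sum_singular_values_Jmat_minus_le:
  fixes B :: "real^'n^'n"
  assumes B: "B \<in> doubly_stochastic" and p: "p > 0"
  shows "(\<Sum>k\<in>UNIV. singular_values (Jmat - B) k powr p) \<le> real CARD('n) - 1"
proof -
  define X where "X = Jmat - B"
  obtain U V where U: "orthogonal_matrix U" and V: "orthogonal_matrix V"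
    and X: "X = U ** diag_mat (singular_values X) ** transpose V"
    by (rule singular_values_svd)
  have le1: "singular_values X k \<le> 1" for k
  proof -
    have "singular_values X k = norm (X *v column k V)"
      by (rule svd_value_eq_norm[OF U V singular_values_nonneg X])
    also have "\<dots> \<le> norm (column k V)"
      unfolding X_def by (rule Jmat_minus_doubly_stochastic_norm_le[OF B])
    also have "\<dots> = 1" using V by (simp add: orthogonal_matrix_orthonormal_columns)
    finally show ?thesis .
  qed
  obtain k0 where k0: "singular_values X k0 = 0"
    using svd_value_zero[OF U V X _ ones_nonzero] Jmat_minus_doubly_stochastic_ones[OF B]
    unfolding X_def by blast
  have "(\<Sum>k\<in>UNIV. singular_values X k powr p)
      = singular_values X k0 powr p + (\<Sum>k\<in>UNIV-{k0}. singular_values X k powr p)"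
    by (simp add: sum.remove)
  also have "\<dots> \<le> 0 + real (card (UNIV - {k0})) * 1"
    using k0 le1 singular_values_nonneg[of X] p by (intro add_mono sum_bounded_above powr_le1) auto
  also have "\<dots> = real CARD('n) - 1"
    by (simp add: card_Diff_singleton_if)
  finally show ?thesis unfolding X_def .
qed

lemma powr_tangent_less:
  fixes p c :: real
  assumes p: "p > 1" and c: "c > 0" "c \<noteq> 1"
  shows "1 + p * (c - 1) < c powr p"
proof -
  define f where "f t = t powr p - 1 - p * (t - 1)" for t :: real
  have der: "DERIV f x :> p * x powr (p - 1) - p" if "x > 0" for x
    unfolding f_def using that by (auto intro!: derivative_eq_intros)
  have "f 1 < f c"
  proof (cases "c > 1")
    case True
    show ?thesis
    proof (rule DERIV_pos_imp_increasing_open[OF True])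
      fix x assume x: "1 < x" "x < c"
      have "x powr (p - 1) > x powr 0" using x p by (intro powr_less_mono) auto
      then show "\<exists>y. DERIV f x :> y \<and> y > 0" using der[of x] x p by auto
    qed (unfold f_def, intro continuous_intros, auto)
  next
    case False
    then have c1: "c < 1" using c by simp
    show ?thesis
    proof (rule DERIV_neg_imp_decreasing_open[OF c1])
      fix x assume x: "c < x" "x < 1"
      have "x powr (p - 1) < x powr 0" using x p c by (intro powr_less_mono') auto
      then show "\<exists>y. DERIV f x :> y \<and> y < 0" using der[of x] x c p by auto
    qed (use c in \<open>unfold f_def, intro continuous_intros, auto\<close>)
  qed
  then show ?thesis by (simp add: f_def)
qed

lemma abs_powr_tangent_less:
  fixes p c :: real
  assumes p: "p > 1" and c: "c \<noteq> 1"
  shows "1 + p * (c - 1) < \<bar>c\<bar> powr p"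
proof (cases "c = 0 \<or> c = -1")
  case True
  then show ?thesis using p by auto
next
  case False
  then have "1 + p * (\<bar>c\<bar> - 1) < \<bar>c\<bar> powr p"
    using c by (intro powr_tangent_less[OF p]) auto
  moreover have "p * (c - 1) \<le> p * (\<bar>c\<bar> - 1)" using p by (intro mult_left_mono) auto
  ultimately show ?thesis by linarith
qed

lemma abs_powr_tangent_le:
  fixes p c :: real
  assumes "p > 1"
  shows "1 + p * (c - 1) \<le> \<bar>c\<bar> powr p"
  using abs_powr_tangent_less[OF assms, of c] by (cases "c = 1") auto

lemma sum_abs_powr_tangent_eq:
  "(\<Sum>k\<in>S. 1 + p * (T k - 1)) = real (card S) + p * ((\<Sum>k\<in>S. T k) - real (card S))"
  by (cases "finite S")
    (simp_all add: sum.distrib sum_subtractf sum_distrib_left[symmetric] algebra_simps)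

lemma sum_abs_powr_ge_tangent:
  assumes "p > 1"
  shows "real (card S) + p * ((\<Sum>k\<in>S. T k) - real (card S)) \<le> (\<Sum>k\<in>S. \<bar>T k\<bar> powr p)"
  unfolding sum_abs_powr_tangent_eq[symmetric] by (intro sum_mono abs_powr_tangent_le[OF assms])

lemma sum_abs_powr_gt_tangent:
  assumes "p > 1" and "finite S" "k \<in> S" "T k \<noteq> 1"
  shows "real (card S) + p * ((\<Sum>k\<in>S. T k) - real (card S)) < (\<Sum>k\<in>S. \<bar>T k\<bar> powr p)"
  unfolding sum_abs_powr_tangent_eq[symmetric]
  using assms abs_powr_tangent_le[OF assms(1)] abs_powr_tangent_less[OF assms(1,4)]
  by (intro sum_strict_mono_ex1) auto

definition perm_matrix :: "('n \<Rightarrow> 'n) \<Rightarrow> real^'n^'n" where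
  "perm_matrix \<sigma> = (\<chi> i j. if \<sigma> i = j then 1 else 0)"

lemma perm_matrix_mult_nth: "(perm_matrix \<sigma> *v x) $ i = x $ (\<sigma> i)"
proof -
  have "(perm_matrix \<sigma> *v x) $ i = (\<Sum>j\<in>UNIV. if j = \<sigma> i then x $ j else 0)"
    by (simp add: perm_matrix_def matrix_vector_mult_def if_distrib[of "\<lambda>y. y * _"] eq_commute
        cong: if_cong)
  then show ?thesis by simp
qed

lemma transpose_perm_matrix_mult_nth:
  assumes "bij \<sigma>"
  shows "(transpose (perm_matrix \<sigma>) *v x) $ i = x $ (inv \<sigma> i)"
proof -
  have "(transpose (perm_matrix \<sigma>) *v x) $ i = (\<Sum>j\<in>UNIV. (if \<sigma> j = i then 1 else 0) * x $ j)"
    by (simp add: perm_matrix_def matrix_vector_mult_def transpose_def)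
  also have "\<dots> = (\<Sum>j\<in>UNIV. if j = inv \<sigma> i then x $ j else 0)"
    using assms by (intro sum.cong) (auto simp: bij_inv_eq_iff)
  finally show ?thesis by simp
qed

lemma perm_matrix_id: "perm_matrix id = (mat 1 :: real^'n^'n)"
  by (simp add: vec_eq_iff perm_matrix_def mat_def)

lemma perm_matrix_doubly_stochastic:
  assumes "bij \<sigma>"
  shows "perm_matrix \<sigma> \<in> doubly_stochastic"
proof -
  have "(\<Sum>j\<in>UNIV. perm_matrix \<sigma> $ i $ j) = 1" for i
    using perm_matrix_mult_nth[of \<sigma> ones i] by (simp add: matrix_vector_mult_def)
  moreover have "(\<Sum>i\<in>UNIV. perm_matrix \<sigma> $ i $ j) = 1" for j
    using transpose_perm_matrix_mult_nth[OF assms, of ones j]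
    by (simp add: matrix_vector_mult_def transpose_def)
  ultimately show ?thesis unfolding doubly_stochastic_def by (auto simp: perm_matrix_def)
qed

lemma Jmat_doubly_stochastic: "(Jmat :: real^'n^'n) \<in> doubly_stochastic"
  by (simp add: doubly_stochastic_def Jmat_def)

definition perm_diag_sum :: "real^'n^'n \<Rightarrow> ('n \<Rightarrow> 'n) \<Rightarrow> real" where
  "perm_diag_sum A \<sigma> = (\<Sum>i\<in>UNIV. A $ i $ (\<sigma> i))"

definition entry_sum :: "real^'n^'n \<Rightarrow> real" where
  "entry_sum A = (\<Sum>i\<in>UNIV. \<Sum>j\<in>UNIV. A $ i $ j)"

lemma cyclic_shift_bij:
  fixes x n :: nat
  assumes "n > 0"
  shows "bij_betw (\<lambda>k. (x + k) mod n) {0..<n} {0..<n}"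
proof -
  have "k' - k = 0" if "k \<le> k'" "k' < n" "(x + k) mod n = (x + k') mod n" for k k'
  proof -
    have "n dvd (x + k') - (x + k)" using that mod_eq_dvd_iff_nat[of "x + k" "x + k'" n] by simp
    then have "n dvd k' - k" by simp
    moreover have "k' - k < n" using that by simp
    ultimately show ?thesis using dvd_imp_le by (metis neq0_conv linorder_not_le)
  qed
  then have "inj_on (\<lambda>k. (x + k) mod n) {0..<n}"
    by (intro inj_onI) (metis atLeastLessThan_iff diff_is_0_eq le_antisym nat_le_linear)
  moreover have "(\<lambda>k. (x + k) mod n) ` {0..<n} \<subseteq> {0..<n}" using assms by auto
  ultimately show ?thesis
    by (simp add: bij_betw_def endo_inj_surj)
qed

text \<open>The \<open>n\<close> cyclic shifts of a permutation cover every entry of \<open>A\<close> exactly once.\<close>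
lemma exists_perm_family_diag_sum:
  fixes A :: "real^'n^'n"
  assumes \<sigma>: "bij \<sigma>"
  obtains \<tau> where "\<And>k. bij (\<tau> k)" "\<tau> 0 = \<sigma>"
    "(\<Sum>k<CARD('n). perm_diag_sum A (\<tau> k)) = entry_sum A"
proof -
  define n where "n = CARD('n)"
  have n0: "n > 0" by (simp add: n_def)
  obtain g where g: "bij_betw g (UNIV::'n set) {0..<n}"
    using ex_bij_betw_finite_nat[of "UNIV::'n set"] by (auto simp: n_def)
  define h where "h = inv_into UNIV g"
  have h: "bij_betw h {0..<n} (UNIV::'n set)" unfolding h_def by (rule bij_betw_inv_into[OF g])
  have hg: "h (g i) = i" for i unfolding h_def using g by (simp add: bij_betw_def)
  have shift: "bij_betw (\<lambda>k. \<sigma> (h ((x + k) mod n))) {0..<n} UNIV" for x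
    using bij_betw_trans[OF bij_betw_trans[OF cyclic_shift_bij[OF n0] h] \<sigma>]
    by (simp add: comp_def)
  define \<tau> where "\<tau> k i = \<sigma> (h ((g i + k) mod n))" for k i
  show thesis
  proof
    fix k
    have "bij_betw ((\<lambda>x. \<sigma> (h ((x + k) mod n))) \<circ> g) UNIV UNIV"
      using bij_betw_trans[OF g shift[of k]] by (simp add: add.commute comp_def)
    then show "bij (\<tau> k)" by (simp add: \<tau>_def[abs_def] comp_def)
  next
    have "g i < n" for i using g by (auto simp: bij_betw_def)
    then show "\<tau> 0 = \<sigma>" by (auto simp: \<tau>_def hg)
  next
    have "(\<Sum>k<n. perm_diag_sum A (\<tau> k)) = (\<Sum>i\<in>UNIV. \<Sum>k\<in>{0..<n}. A $ i $ (\<tau> k i))"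
      unfolding perm_diag_sum_def by (subst sum.swap) (simp add: atLeast0LessThan)
    also have "\<dots> = entry_sum A"
      unfolding entry_sum_def \<tau>_def by (intro sum.cong refl sum.reindex_bij_betw[OF shift])
    finally show "(\<Sum>k<CARD('n). perm_diag_sum A (\<tau> k)) = entry_sum A" by (simp add: n_def)
  qed
qed

lemma exists_le_mean:
  fixes t :: "nat \<Rightarrow> real"
  assumes "(\<Sum>k<n. t k) = real n * a" "n > 0"
  shows "\<exists>k<n. t k \<le> a \<and> (t 0 \<noteq> a \<longrightarrow> t k < a)"
proof (cases "t 0 = a")
  case True
  then show ?thesis using assms(2) by (intro exI[of _ 0]) auto
next
  case False
  have "\<exists>k<n. t k < a"
  proof (rule ccontr)
    assume "\<not> ?thesis"
    then have "\<forall>k\<in>{..<n}. a \<le> t k" by (metis lessThan_iff not_less)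
    moreover have "a < t 0" using \<open>\<forall>k\<in>{..<n}. a \<le> t k\<close> False assms(2) by force
    ultimately have "(\<Sum>k<n. a) < (\<Sum>k<n. t k)"
      using assms(2) by (intro sum_strict_mono_ex1) auto
    then show False using assms(1) by simp
  qed
  then show ?thesis by auto
qed

lemma exists_perm_diag_sum_le_mean:
  fixes A :: "real^'n^'n"
  assumes \<sigma>: "bij \<sigma>"
  shows "\<exists>\<sigma>'. bij \<sigma>' \<and> perm_diag_sum A \<sigma>' \<le> entry_sum A / real CARD('n) \<and>
      (perm_diag_sum A \<sigma> \<noteq> entry_sum A / real CARD('n) \<longrightarrow>
        perm_diag_sum A \<sigma>' < entry_sum A / real CARD('n))"
proof -
  obtain \<tau> where \<tau>: "\<And>k. bij (\<tau> k)" "\<tau> 0 = \<sigma>"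
    "(\<Sum>k<CARD('n). perm_diag_sum A (\<tau> k)) = entry_sum A"
    using exists_perm_family_diag_sum[OF \<sigma>] by blast
  obtain k where "perm_diag_sum A (\<tau> k) \<le> entry_sum A / real CARD('n)"
    "perm_diag_sum A (\<tau> 0) \<noteq> entry_sum A / real CARD('n) \<longrightarrow>
      perm_diag_sum A (\<tau> k) < entry_sum A / real CARD('n)"
    using exists_le_mean[where n="CARD('n)" and t="\<lambda>k. perm_diag_sum A (\<tau> k)"
        and a="entry_sum A / real CARD('n)"] \<tau>(3) by auto
  then show ?thesis using \<tau>(1,2) by blast
qed

definition householder :: "real^'n \<Rightarrow> real^'n \<Rightarrow> real^'n" where
  "householder w v = v - (2 / (w \<bullet> w) * (w \<bullet> v)) *\<^sub>R w"

lemma orthogonal_transformation_householder: "orthogonal_transformation (householder w)"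
  unfolding orthogonal_transformation_def
proof (intro conjI allI)
  show "linear (householder w)"
    unfolding householder_def
    by (intro bounded_linear.linear bounded_linear_intros)
  fix u v
  show "householder w u \<bullet> householder w v = u \<bullet> v"
  proof (cases "w = 0")
    case False
    define c where "c = w \<bullet> w"
    have "c \<noteq> 0" using False by (simp add: c_def)
    have "householder w u \<bullet> householder w v = u \<bullet> v - (2 / c * (w \<bullet> u)) * (w \<bullet> v)
        - (2 / c * (w \<bullet> v)) * (w \<bullet> u) + (2 / c * (w \<bullet> u)) * (2 / c * (w \<bullet> v)) * c"
      unfolding householder_def c_def inner_diff_left inner_diff_right inner_scaleR_left
        inner_scaleR_right by (simp add: inner_commute[of u w] inner_commute[of v w])
    also have "\<dots> = u \<bullet> v" using \<open>c \<noteq> 0\<close> by (simp add: field_simps)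
    finally show ?thesis .
  qed (simp add: householder_def)
qed

lemma householder_orthogonal: "w \<bullet> v = 0 \<Longrightarrow> householder w v = v"
  by (simp add: householder_def)

lemma householder_diff: "norm a = norm b \<Longrightarrow> householder (a - b) a = b"
proof (cases "a = b")
  case False
  assume "norm a = norm b"
  then have "a \<bullet> a = b \<bullet> b" by (simp add: dot_square_norm)
  then have "(a - b) \<bullet> b = - ((a - b) \<bullet> a)" by (simp add: inner_diff_left inner_commute[of b a])
  then have "(a - b) \<bullet> (a - b) = 2 * ((a - b) \<bullet> a)" by (simp add: inner_diff_right)
  moreover have "(a - b) \<bullet> (a - b) \<noteq> 0" using False by simp
  ultimately show ?thesis by (simp add: householder_def)
qed (simp add: householder_def)

lemma exists_orthogonal_matrix_column:
  fixes x :: "real^'n"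
  assumes "norm x = 1"
  obtains U where "orthogonal_matrix U" "column i U = x"
  using orthogonal_matrix_exists_basis[OF assms, of i] by (metis matrix_vector_mult_basis)

lemma exists_orthogonal_matrix_two_columns:
  fixes x y :: "real^'n"
  assumes x: "norm x = 1" and y: "norm y = 1" and xy: "x \<bullet> y = 0" and ij: "i \<noteq> j"
  obtains U where "orthogonal_matrix U" "column i U = x" "column j U = y"
proof -
  obtain U0 where U0: "orthogonal_matrix U0" and U0x: "column i U0 = x"
    using exists_orthogonal_matrix_column[OF x] by blast
  define z where "z = transpose U0 *v y"
  have "orthogonal_transformation ((*v) (transpose U0))"
    using U0 by (simp add: orthogonal_transformation_matrix)
  then have "norm (axis j (1::real)) = norm z"
    using y by (simp add: z_def orthogonal_transformation_norm)
  then have Hj: "householder (axis j 1 - z) (axis j 1) = z" by (rule householder_diff)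
  have "z $ i = x \<bullet> y"
    by (simp add: z_def U0x[symmetric] matrix_vector_mult_def transpose_def inner_vec_def column_def)
  then have "(axis j 1 - z) \<bullet> axis i 1 = 0" using ij xy by (simp add: inner_diff_left inner_axis) (simp add: axis_def)
  then have Hi: "householder (axis j 1 - z) (axis i 1) = axis i 1" by (rule householder_orthogonal)
  define H where "H = matrix (householder (axis j 1 - z))"
  have "orthogonal_transformation (householder (axis j 1 - z))"
    by (rule orthogonal_transformation_householder)
  then have "orthogonal_matrix H" and H: "H *v v = householder (axis j 1 - z) v" for v
    by (simp_all add: H_def orthogonal_transformation_matrix orthogonal_transformation_linear)
  show thesis
  proof
    show "orthogonal_matrix (U0 ** H)" using U0 \<open>orthogonal_matrix H\<close> by (rule orthogonal_matrix_mul)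
    have col: "column k (U0 ** H) = U0 *v householder (axis j 1 - z) (axis k 1)" for k
      by (simp only: matrix_vector_mult_basis[symmetric] matrix_vector_mul_assoc[symmetric] H)
    show "column i (U0 ** H) = x" by (simp add: col Hi matrix_vector_mult_basis U0x)
    have "U0 *v z = y" using U0 by (simp add: z_def matrix_vector_mul_assoc orthogonal_matrix_def)
    then show "column j (U0 ** H) = y" by (simp add: col Hj)
  qed
qed

section \<open>The lower bound\<close>

definition ones_unit :: "real^'n" where
  "ones_unit = (1 / sqrt (real CARD('n))) *\<^sub>R ones"

lemma inner_ones_left: "(ones::real^'n) \<bullet> v = (\<Sum>i\<in>UNIV. v$i)"
  by (simp add: ones_def inner_vec_def)

lemma inner_ones_axis: "(ones::real^'n) \<bullet> axis k 1 = 1"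
  by (simp add: inner_ones_left axis_def)

lemma inner_ones_ones: "(ones::real^'n) \<bullet> ones = real CARD('n)"
  by (simp add: inner_ones_left)

lemma inner_ones_unit_ones_unit: "(ones_unit::real^'n) \<bullet> ones_unit = 1"
  by (simp add: ones_unit_def inner_ones_ones)

lemma norm_ones_unit: "norm (ones_unit::real^'n) = 1"
  using inner_ones_unit_ones_unit by (simp add: norm_eq_1)

lemma inner_ones_unit_eq_0_iff: "ones_unit \<bullet> (u::real^'n) = 0 \<longleftrightarrow> ones \<bullet> u = 0"
  by (simp add: ones_unit_def)

lemma inner_ones_matrix_ones: "(ones::real^'n) \<bullet> ((A::real^'n^'n) *v ones) = entry_sum A"
  by (simp add: inner_ones_left matrix_vector_mult_def entry_sum_def)

lemma inner_ones_unit_matrix_ones_unit: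
  "(ones_unit::real^'n) \<bullet> ((A::real^'n^'n) *v ones_unit) = entry_sum A / real CARD('n)"
  by (simp add: ones_unit_def matrix_vector_mult_scaleR inner_ones_matrix_ones)

lemma perm_matrix_ones: "perm_matrix \<sigma> *v ones = ones"
  by (simp add: vec_eq_iff perm_matrix_mult_nth)

lemma transpose_perm_matrix_ones: "bij \<sigma> \<Longrightarrow> transpose (perm_matrix \<sigma>) *v ones = ones"
  by (simp add: vec_eq_iff transpose_perm_matrix_mult_nth)

lemma perm_matrix_transpose_perm_matrix:
  "bij \<sigma> \<Longrightarrow> perm_matrix \<sigma> *v (transpose (perm_matrix \<sigma>) *v u) = u"
  by (simp add: vec_eq_iff perm_matrix_mult_nth transpose_perm_matrix_mult_nth bij_is_inj)

text \<open>The reflection of \<open>P\<^sup>T\<close> through the line of \<open>ones\<close>: it fixes \<open>ones\<close> and acts as \<open>-P\<^sup>T\<close>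
  on its orthogonal complement.\<close>
definition perm_reflection :: "('n \<Rightarrow> 'n) \<Rightarrow> real^'n^'n" where
  "perm_reflection \<sigma> = 2 *\<^sub>R Jmat - transpose (perm_matrix \<sigma>)"

lemma perm_reflection_nth:
  fixes \<sigma> :: "'n::finite \<Rightarrow> 'n"
  shows "perm_reflection \<sigma> $ i $ j = 2 / real CARD('n) - (if \<sigma> j = i then 1 else 0)"
  by (simp add: perm_reflection_def Jmat_def perm_matrix_def transpose_def)

lemma column_perm_reflection:
  fixes \<sigma> :: "'n::finite \<Rightarrow> 'n"
  shows "column k (perm_reflection \<sigma>) = (2 / real CARD('n)) *\<^sub>R ones - axis (\<sigma> k) 1"
  by (simp add: vec_eq_iff perm_reflection_nth column_def axis_def eq_commute)

lemma orthogonal_matrix_perm_reflection: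
  fixes \<sigma> :: "'n::finite \<Rightarrow> 'n"
  assumes "bij \<sigma>"
  shows "orthogonal_matrix (perm_reflection \<sigma>)"
  unfolding orthogonal_matrix_orthonormal_columns orthogonal_def column_perm_reflection
proof (intro conjI allI impI)
  have inner: "((2 / real CARD('n)) *\<^sub>R ones - axis (\<sigma> i) 1) \<bullet>
      ((2 / real CARD('n)) *\<^sub>R ones - axis (\<sigma> j) (1::real)) = (if i = j then 1 else 0)" for i j
  proof -
    have "\<sigma> i = \<sigma> j \<longleftrightarrow> i = j" using assms by (auto simp: bij_def inj_def)
    then show ?thesis
      by (simp add: inner_diff_left inner_diff_right inner_ones_axis inner_commute[of "axis _ _" ones]
          inner_axis_axis inner_ones_ones field_simps)
  qed
  show "norm ((2 / real CARD('n)) *\<^sub>R ones - axis (\<sigma> i) (1::real)) = 1" for i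
    using inner[of i i] by (simp add: norm_eq_1)
  show "((2 / real CARD('n)) *\<^sub>R ones - axis (\<sigma> i) 1) \<bullet>
      ((2 / real CARD('n)) *\<^sub>R ones - axis (\<sigma> j) (1::real)) = 0" if "i \<noteq> j" for i j
    using inner[of i j] that by simp
qed

lemma perm_reflection_mult:
  fixes \<sigma> :: "'n::finite \<Rightarrow> 'n"
  assumes "bij \<sigma>"
  shows "perm_reflection \<sigma> *v v =
    ((2 / real CARD('n)) * (ones \<bullet> v)) *\<^sub>R ones - transpose (perm_matrix \<sigma>) *v v"
proof -
  have "(2 *\<^sub>R Jmat *v v) = ((2 / real CARD('n)) * (ones \<bullet> v)) *\<^sub>R (ones :: real^'n)"
    by (simp add: vec_eq_iff matrix_vector_mult_def Jmat_def inner_ones_left sum_distrib_left)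
  then show ?thesis by (simp add: perm_reflection_def matrix_vector_mult_diff_rdistrib)
qed

lemma perm_reflection_ones:
  fixes \<sigma> :: "'n::finite \<Rightarrow> 'n"
  shows "bij \<sigma> \<Longrightarrow> perm_reflection \<sigma> *v ones = ones"
  by (simp add: perm_reflection_mult transpose_perm_matrix_ones inner_ones_ones scaleR_2 algebra_simps)

lemma perm_reflection_ones_unit:
  fixes \<sigma> :: "'n::finite \<Rightarrow> 'n"
  shows "bij \<sigma> \<Longrightarrow> perm_reflection \<sigma> *v ones_unit = ones_unit"
  by (simp add: ones_unit_def matrix_vector_mult_scaleR perm_reflection_ones)

lemma perm_reflection_ones_orthogonal:
  fixes \<sigma> :: "'n::finite \<Rightarrow> 'n"
  shows "bij \<sigma> \<Longrightarrow> ones \<bullet> u = 0 \<Longrightarrow> perm_reflection \<sigma> *v u = - (transpose (perm_matrix \<sigma>) *v u)"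
  by (simp add: perm_reflection_mult)

lemma trace_perm_reflection:
  fixes A :: "real^'n^'n" and \<sigma> :: "'n \<Rightarrow> 'n"
  shows "trace ((A - perm_matrix \<sigma>) ** perm_reflection \<sigma>) =
    2 * (entry_sum A / real CARD('n)) - perm_diag_sum A \<sigma> - 2 + real CARD('n)"
proof -
  have "((A - perm_matrix \<sigma>) ** perm_reflection \<sigma>) $ k $ k =
      (2 / real CARD('n)) * (\<Sum>j\<in>UNIV. A$k$j) - A$k$(\<sigma> k) - 2 / real CARD('n) + 1" for k
  proof -
    have "((A - perm_matrix \<sigma>) ** perm_reflection \<sigma>) $ k $ k = (\<Sum>j\<in>UNIV. (2 / real CARD('n)) * A$k$j
        - (if \<sigma> k = j then A$k$j else 0) - (if \<sigma> k = j then 2 / real CARD('n) else 0)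
        + (if \<sigma> k = j then 1 else 0))"
      by (simp add: matrix_matrix_mult_def perm_reflection_nth perm_matrix_def algebra_simps)
        (rule sum.cong, auto)
    then show ?thesis by (simp add: sum.distrib sum_subtractf sum_distrib_left)
  qed
  then show ?thesis
    by (simp add: trace_def sum.distrib sum_subtractf sum_distrib_left[symmetric] entry_sum_def
        perm_diag_sum_def sum_divide_distrib[symmetric])
qed

lemma trace_orthogonal_conj:
  fixes U N :: "real^'n^'n"
  assumes "orthogonal_matrix U"
  shows "trace (transpose U ** N ** U) = trace N"
proof -
  have "trace (transpose U ** (N ** U)) = trace (N ** U ** transpose U)"
    by (rule trace_mul_sym)
  then have "trace (transpose U ** N ** U) = trace (N ** U ** transpose U)"
    by (simp add: matrix_mul_assoc)
  also have "\<dots> = trace N"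
    using assms by (simp add: matrix_mul_assoc[symmetric] orthogonal_matrix_def)
  finally show ?thesis .
qed

text \<open>The diagonal of \<open>U\<^sup>T (A - P) W\<close> for the orthogonal matrix \<open>W = (2J - P\<^sup>T) U\<close>; when a
  column of \<open>U\<close> is the normalised all-ones vector, the corresponding entry and the trace only
  depend on the entry sum and on the \<open>\<sigma>\<close>-diagonal sum of \<open>A\<close>.\<close>
definition reflected_diag :: "real^'n^'n \<Rightarrow> ('n \<Rightarrow> 'n) \<Rightarrow> real^'n^'n \<Rightarrow> 'n \<Rightarrow> real" where
  "reflected_diag A \<sigma> U k =
    (transpose U ** (A - perm_matrix \<sigma>) ** (perm_reflection \<sigma> ** U)) $ k $ k"

lemma reflected_diag_eq:
  "reflected_diag A \<sigma> U k =
    column k U \<bullet> ((A - perm_matrix \<sigma>) *v (perm_reflection \<sigma> *v column k U))"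
  by (simp add: reflected_diag_def transpose_mult_mult_entry column_matrix_mult)

lemma sum_abs_powr_reflected_diag_le:
  fixes A U :: "real^'n^'n"
  assumes "p \<ge> 1" "bij \<sigma>" "orthogonal_matrix U"
  shows "(\<Sum>k\<in>UNIV. \<bar>reflected_diag A \<sigma> U k\<bar> powr p)
    \<le> (\<Sum>k\<in>UNIV. singular_values (A - perm_matrix \<sigma>) k powr p)"
  unfolding reflected_diag_def using assms
  by (intro diag_powr_sum_le_singular_values orthogonal_matrix_mul orthogonal_matrix_perm_reflection)

lemma sum_reflected_diag:
  fixes A U :: "real^'n^'n" and \<sigma> :: "'n \<Rightarrow> 'n"
  assumes "orthogonal_matrix U"
  shows "(\<Sum>k\<in>UNIV. reflected_diag A \<sigma> U k) =
    2 * (entry_sum A / real CARD('n)) - perm_diag_sum A \<sigma> - 2 + real CARD('n)"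
proof -
  have "(\<Sum>k\<in>UNIV. reflected_diag A \<sigma> U k) =
      trace (transpose U ** ((A - perm_matrix \<sigma>) ** perm_reflection \<sigma>) ** U)"
    by (simp add: trace_def reflected_diag_def matrix_mul_assoc)
  then show ?thesis by (simp add: trace_orthogonal_conj[OF assms] trace_perm_reflection)
qed

lemma reflected_diag_ones_unit:
  fixes A U :: "real^'n^'n" and \<sigma> :: "'n \<Rightarrow> 'n"
  assumes "bij \<sigma>" and "column i0 U = ones_unit"
  shows "reflected_diag A \<sigma> U i0 = entry_sum A / real CARD('n) - 1"
proof -
  have "reflected_diag A \<sigma> U i0 = ones_unit \<bullet> (A *v ones_unit) - ones_unit \<bullet> (perm_matrix \<sigma> *v ones_unit)"
    using assms by (simp add: reflected_diag_eq perm_reflection_ones_unit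
        matrix_vector_mult_diff_rdistrib inner_diff_right)
  moreover have "perm_matrix \<sigma> *v ones_unit = ones_unit"
    by (simp add: ones_unit_def matrix_vector_mult_scaleR perm_matrix_ones)
  ultimately show ?thesis by (simp add: inner_ones_unit_matrix_ones_unit inner_ones_unit_ones_unit)
qed

lemma reflected_diag_orthogonal:
  fixes A U :: "real^'n^'n" and \<sigma> :: "'n \<Rightarrow> 'n"
  assumes \<sigma>: "bij \<sigma>" and U: "orthogonal_matrix U" and col: "column i0 U = ones_unit" and k: "k \<noteq> i0"
  shows "reflected_diag A \<sigma> U k =
    1 - column k U \<bullet> (A *v (transpose (perm_matrix \<sigma>) *v column k U))"
proof -
  define u where "u = column k U"
  have "u \<bullet> ones_unit = 0" and uu: "u \<bullet> u = 1"
    using U k col by (simp_all add: u_def orthogonal_matrix_orthonormal_columns orthogonal_def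
        norm_eq_1 flip: col)
  then have "ones \<bullet> u = 0" by (metis inner_commute inner_ones_unit_eq_0_iff)
  then have "reflected_diag A \<sigma> U k =
      u \<bullet> (perm_matrix \<sigma> *v (transpose (perm_matrix \<sigma>) *v u))
      - u \<bullet> (A *v (transpose (perm_matrix \<sigma>) *v u))"
    using \<sigma> by (simp add: reflected_diag_eq u_def[symmetric] perm_reflection_ones_orthogonal
        matrix_vector_mult_uminus matrix_vector_mult_diff_rdistrib inner_diff_right)
  then show ?thesis using \<sigma> uu by (simp add: perm_matrix_transpose_perm_matrix u_def)
qed

lemma reflected_diag_estimates:
  fixes A U :: "real^'n^'n" and \<sigma> :: "'n \<Rightarrow> 'n"
  assumes p: "p \<ge> 1" and \<sigma>: "bij \<sigma>" and U: "orthogonal_matrix U" and col: "column i0 U = ones_unit"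
  shows "\<bar>entry_sum A / real CARD('n) - 1\<bar> powr p + (\<Sum>k\<in>UNIV-{i0}. \<bar>reflected_diag A \<sigma> U k\<bar> powr p)
      \<le> (\<Sum>k\<in>UNIV. singular_values (A - perm_matrix \<sigma>) k powr p)"
    and "(\<Sum>k\<in>UNIV-{i0}. reflected_diag A \<sigma> U k) =
      real CARD('n) - 1 + entry_sum A / real CARD('n) - perm_diag_sum A \<sigma>"
  using sum_abs_powr_reflected_diag_le[OF p \<sigma> U, of A] sum_reflected_diag[OF U, of A \<sigma>]
    sum.remove[of UNIV i0 "\<lambda>k. \<bar>reflected_diag A \<sigma> U k\<bar> powr p"]
    sum.remove[of UNIV i0 "reflected_diag A \<sigma> U"]
  by (simp_all add: reflected_diag_ones_unit[OF \<sigma> col])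

lemma sum_singular_values_ge:
  fixes A U :: "real^'n^'n"
  assumes p: "p > 1" and \<sigma>: "bij \<sigma>" and U: "orthogonal_matrix U" and col: "column i0 U = ones_unit"
  shows "\<bar>entry_sum A / real CARD('n) - 1\<bar> powr p + (real CARD('n) - 1)
      + p * (entry_sum A / real CARD('n) - perm_diag_sum A \<sigma>)
      \<le> (\<Sum>k\<in>UNIV. singular_values (A - perm_matrix \<sigma>) k powr p)"
  using sum_abs_powr_ge_tangent[OF p, of "UNIV-{i0}" "reflected_diag A \<sigma> U"]
    reflected_diag_estimates[OF _ \<sigma> U col, of p A] p
  by (simp add: card_Diff_singleton_if)

lemma sum_singular_values_gt:
  fixes A U :: "real^'n^'n"
  assumes p: "p > 1" and \<sigma>: "bij \<sigma>" and U: "orthogonal_matrix U" and col: "column i0 U = ones_unit"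
    and k: "k \<noteq> i0" "column k U \<bullet> (A *v (transpose (perm_matrix \<sigma>) *v column k U)) \<noteq> 0"
  shows "\<bar>entry_sum A / real CARD('n) - 1\<bar> powr p + (real CARD('n) - 1)
      + p * (entry_sum A / real CARD('n) - perm_diag_sum A \<sigma>)
      < (\<Sum>k\<in>UNIV. singular_values (A - perm_matrix \<sigma>) k powr p)"
  using sum_abs_powr_gt_tangent[OF p, of "UNIV-{i0}" k "reflected_diag A \<sigma> U"]
    reflected_diag_estimates[OF _ \<sigma> U col, of p A] reflected_diag_orthogonal[OF \<sigma> U col k(1)] p k
  by (simp add: card_Diff_singleton_if)

section \<open>Strictness of the lower bound\<close>

lemma transpose_perm_matrix_swap:
  fixes u :: "real^'n"
  assumes "a \<noteq> b"
  shows "transpose (perm_matrix (Transposition.transpose a b)) *v u =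
    u - (u$a - u$b) *\<^sub>R (axis a 1 - axis b 1)"
  using assms by (auto simp: vec_eq_iff transpose_perm_matrix_mult_nth axis_def Transposition.transpose_def)

lemma inner_ones_axis_diff: "(ones::real^'n) \<bullet> (axis a 1 - axis b 1) = 0"
  by (simp add: inner_diff_right inner_ones_axis)

text \<open>Testing the hypothesis with the identity and with transpositions, and polarising.\<close>
lemma form_vanishes_on_axis_diff:
  fixes A :: "real^'n^'n"
  assumes H: "\<And>\<sigma> u. bij \<sigma> \<Longrightarrow> ones \<bullet> u = 0 \<Longrightarrow> u \<bullet> (A *v (transpose (perm_matrix \<sigma>) *v u)) = 0"
    and g: "ones \<bullet> g = 0" and ab: "a \<noteq> b"
  shows "g \<bullet> (A *v (axis a 1 - axis b 1)) = 0"
proof -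
  have diag: "u \<bullet> (A *v u) = 0" if "ones \<bullet> u = 0" for u
    using H[of id u] that by (simp add: perm_matrix_id)
  have swap: "(u$a - u$b) * (u \<bullet> (A *v (axis a 1 - axis b 1))) = 0" if "ones \<bullet> u = 0" for u
  proof -
    have "0 = u \<bullet> (A *v (u - (u$a - u$b) *\<^sub>R (axis a 1 - axis b 1)))"
      using H[of "Transposition.transpose a b" u] that ab by (simp add: transpose_perm_matrix_swap)
    also have "\<dots> = u \<bullet> (A *v u) - (u$a - u$b) * (u \<bullet> (A *v (axis a 1 - axis b 1)))"
      by (simp add: matrix_vector_mult_diff_distrib matrix_vector_mult_scaleR inner_diff_right)
    finally show ?thesis using diag[OF that] by simp
  qed
  define f :: "real^'n" where "f = axis a 1 - axis b 1"
  have f1: "ones \<bullet> f = 0" by (simp add: f_def inner_ones_axis_diff)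
  have f2: "f$a - f$b = 2" using ab by (simp add: f_def axis_def)
  have f3: "f \<bullet> (A *v f) = 0" using diag[OF f1] .
  obtain v where v: "v = f + g \<or> v = f - g" and "v$a - v$b > 0"
    using f2 by (cases "g$a - g$b \<ge> 0") (force intro: that[of "f + g"] that[of "f - g"])+
  moreover have "ones \<bullet> v = 0" using v f1 g by (auto simp: inner_add_right inner_diff_right)
  ultimately have "v \<bullet> (A *v f) = 0" using swap[of v] by (simp add: f_def)
  then show ?thesis using v f3 by (auto simp: inner_add_left inner_diff_left f_def)
qed

lemma form_vanishes_if_vanishes_on_axis_diff:
  fixes A :: "real^'n^'n"
  assumes H: "\<And>a b. g \<bullet> (A *v (axis a 1 - axis b 1)) = 0" and h: "ones \<bullet> h = 0"
  shows "g \<bullet> (A *v h) = 0"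
proof -
  fix a0 :: 'n
  define c where "c = g \<bullet> (A *v axis a0 1)"
  have "g \<bullet> (A *v axis b 1) = c" for b
    using H[of b a0] by (simp add: c_def matrix_vector_mult_diff_distrib inner_diff_right)
  then have col: "(\<Sum>i\<in>UNIV. g$i * A$i$b) = c" for b
    by (simp add: inner_vec_def matrix_vector_mult_def axis_def if_distrib[of "\<lambda>x. _ * x"] cong: if_cong)
  have "g \<bullet> (A *v h) = (\<Sum>i\<in>UNIV. \<Sum>b\<in>UNIV. g$i * A$i$b * h$b)"
    by (simp add: inner_vec_def matrix_vector_mult_def sum_distrib_left mult.assoc)
  also have "\<dots> = (\<Sum>b\<in>UNIV. h$b * (\<Sum>i\<in>UNIV. g$i * A$i$b))"
    by (subst sum.swap) (simp add: sum_distrib_left mult.commute)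
  also have "\<dots> = c * (ones \<bullet> h)" by (simp add: col inner_ones_left sum_distrib_left mult.commute)
  finally show ?thesis using h by simp
qed

lemma eq_Jmat_if_form_vanishes:
  fixes A :: "real^'n^'n"
  assumes rows: "A *v ones = ones" and cols: "transpose A *v ones = ones"
    and q: "\<And>g h. ones \<bullet> g = 0 \<Longrightarrow> ones \<bullet> h = 0 \<Longrightarrow> g \<bullet> (A *v h) = 0"
  shows "A = Jmat"
proof -
  have rs: "(\<Sum>l\<in>UNIV. A$i$l) = 1" for i
    using arg_cong[OF rows, of "\<lambda>v. v$i"] by (simp add: matrix_vector_mult_def)
  have cs: "(\<Sum>k\<in>UNIV. A$k$j) = 1" for j
    using arg_cong[OF cols, of "\<lambda>v. v$j"] by (simp add: matrix_vector_mult_def transpose_def)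
  have "(axis i 1 - axis k 1) \<bullet> (A *v (axis j 1 - axis l 1)) = A$i$j - A$i$l - A$k$j + A$k$l"
    for i j k l
    by (simp add: matrix_vector_mult_diff_distrib inner_diff_left inner_diff_right axis_inner_matrix_axis)
  moreover have "(axis i 1 - axis k 1) \<bullet> (A *v (axis j 1 - axis l 1)) = 0" for i j k l
    by (rule q) (simp_all add: inner_ones_axis_diff)
  ultimately have e: "A$i$j - A$i$l - A$k$j + A$k$l = 0" for i j k l by metis
  have "A$i$j = 1 / real CARD('n)" for i j
  proof -
    have "(\<Sum>k\<in>UNIV. \<Sum>l\<in>UNIV. A$i$j - A$i$l - A$k$j + A$k$l) = 0" by (simp add: e)
    then have "real CARD('n) * real CARD('n) * A$i$j - real CARD('n) = 0"
      by (simp add: sum.distrib sum_subtractf rs) (simp add: sum_distrib_left[symmetric] cs)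
    then have "real CARD('n) * (real CARD('n) * A$i$j - 1) = 0" by (simp add: algebra_simps)
    then show ?thesis by (simp add: field_simps)
  qed
  then show ?thesis by (simp add: vec_eq_iff Jmat_def)
qed

lemma exists_other_index:
  fixes g :: "real^'n" and i0 :: 'n
  assumes "ones \<bullet> g = 0" "g \<noteq> 0"
  shows "\<exists>i1. i1 \<noteq> i0"
proof (rule ccontr)
  assume "\<nexists>i1. i1 \<noteq> i0"
  then have "UNIV = {i0}" by auto
  then have "ones \<bullet> g = (\<Sum>i\<in>{i0}. g $ i)" by (metis inner_ones_left)
  then have "g $ i0 = 0" using assms(1) by simp
  moreover have "i = i0" for i using \<open>UNIV = {i0}\<close> by blast
  ultimately have "g $ i = 0" for i by (metis (full_types))
  then have "g = 0" by (simp add: vec_eq_iff)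
  then show False using assms(2) by simp
qed

lemma exists_rotation_gt_one:
  fixes \<Gamma> :: real
  assumes "\<Gamma> \<noteq> 0"
  shows "\<exists>c s. c^2 + s^2 = 1 \<and> 1 < \<Gamma> * s + c"
proof -
  define r where "r = sqrt (1 + \<Gamma>^2)"
  have r1: "r > 1" using assms by (simp add: r_def real_less_rsqrt)
  have rr: "r * r = 1 + \<Gamma>^2" by (simp add: r_def)
  have "(1 / r)^2 + (\<Gamma> / r)^2 = (1 + \<Gamma>^2) / (r * r)"
    by (simp add: power_divide add_divide_distrib power2_eq_square)
  also have "\<dots> = 1" using r1 by (simp add: rr[symmetric])
  moreover have "\<Gamma> * (\<Gamma> / r) + 1 / r = r" using rr r1 by (simp add: field_simps power2_eq_square)
  ultimately show ?thesis using r1 by (intro exI[of _ "1 / r"] exI[of _ "\<Gamma> / r"]) auto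
qed

text \<open>Normalise \<open>A 1 - 1\<close>, which is orthogonal to \<open>1\<close> when the entries of \<open>A\<close> sum to \<open>n\<close>.\<close>
lemma exists_unit_ones_orthogonal_inner_pos:
  fixes A :: "real^'n^'n"
  assumes sum: "entry_sum A = real CARD('n)" and rows: "A *v ones \<noteq> ones"
  shows "\<exists>g. norm g = 1 \<and> ones \<bullet> g = 0 \<and> 0 < g \<bullet> (A *v ones_unit)"
proof -
  define \<gamma> where "\<gamma> = A *v ones - ones"
  have \<gamma>0: "\<gamma> \<noteq> 0" using rows by (simp add: \<gamma>_def)
  have \<gamma>1: "ones \<bullet> \<gamma> = 0" by (simp add: \<gamma>_def inner_diff_right inner_ones_matrix_ones inner_ones_ones sum)
  define g where "g = \<gamma> /\<^sub>R norm \<gamma>"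
  have "g \<bullet> (A *v ones) = g \<bullet> \<gamma>" using \<gamma>1 by (simp add: g_def \<gamma>_def inner_diff_right inner_commute)
  also have "\<dots> = norm \<gamma>" using \<gamma>0 by (simp add: g_def dot_square_norm power2_eq_square)
  finally have "g \<bullet> (A *v ones_unit) = norm \<gamma> / sqrt (real CARD('n))"
    by (simp add: ones_unit_def matrix_vector_mult_scaleR)
  then show ?thesis using \<gamma>0 \<gamma>1 by (intro exI[of _ g]) (simp add: g_def)
qed

text \<open>If \<open>A\<close> is not row stochastic, a rotation in the plane of \<open>1\<close> and \<open>A 1 - 1\<close> produces one
  diagonal entry of modulus greater than \<open>1\<close>, all others except one having modulus \<open>1\<close>.\<close>
lemma diag_powr_sum_gt_if_not_row_stochastic:
  fixes A :: "real^'n^'n"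
  assumes p: "p > 1" and sum: "entry_sum A = real CARD('n)"
    and q: "\<And>g h. ones \<bullet> g = 0 \<Longrightarrow> ones \<bullet> h = 0 \<Longrightarrow> g \<bullet> (A *v h) = 0"
    and rows: "A *v ones \<noteq> ones"
  shows "\<exists>U W. orthogonal_matrix U \<and> orthogonal_matrix W \<and>
     real CARD('n) - 1 < (\<Sum>k\<in>UNIV. \<bar>(transpose U ** (A - mat 1) ** W) $ k $ k\<bar> powr p)"
proof -
  fix i0 :: 'n
  obtain g where ng: "norm g = 1" and g1: "ones \<bullet> g = 0" and gA: "0 < g \<bullet> (A *v ones_unit)"
    using exists_unit_ones_orthogonal_inner_pos[OF sum rows] by blast
  have gg: "g \<bullet> g = 1" and gu: "ones_unit \<bullet> g = 0"
    using ng g1 by (simp_all add: norm_eq_1 inner_ones_unit_eq_0_iff)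
  obtain i1 where i01: "i0 \<noteq> i1" using exists_other_index[OF g1, of i0] ng by force
  obtain U where U: "orthogonal_matrix U" and Ui0: "column i0 U = ones_unit" and Ui1: "column i1 U = g"
    using exists_orthogonal_matrix_two_columns[OF norm_ones_unit ng gu i01] by blast
  obtain c s where cs: "c^2 + s^2 = 1" and gt: "1 < (g \<bullet> (A *v ones_unit)) * s + c"
    using exists_rotation_gt_one[of "g \<bullet> (A *v ones_unit)"] gA by auto
  define W where "W = U ** givens i0 i1 c s"
  have W: "orthogonal_matrix W" unfolding W_def using U i01 cs
    by (intro orthogonal_matrix_mul orthogonal_matrix_givens)
  define T where "T k = (transpose U ** (A - mat 1) ** W) $ k $ k" for k
  have T: "T k = column k U \<bullet> ((A - mat 1) *v (U *v column k (givens i0 i1 c s)))" for k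
    by (simp add: T_def W_def transpose_mult_mult_entry column_matrix_mult)
  have "T i1 = - ((g \<bullet> (A *v ones_unit)) * s + c)"
    using i01 q[OF g1 g1] gg gu
    by (simp add: T Ui1 column_givens_second matrix_vector_mult_diff_distrib matrix_vector_mult_scaleR
        matrix_vector_mult_basis Ui0 matrix_vector_mult_diff_rdistrib inner_diff_right inner_commute)
  then have Ti1: "\<bar>T i1\<bar> powr p > 1" using gt p by simp
  have Tk: "\<bar>T k\<bar> powr p = 1" if "k \<noteq> i0" "k \<noteq> i1" for k
  proof -
    have "column k U \<bullet> column k U = 1" "ones \<bullet> column k U = 0"
      using U that by (simp_all add: orthogonal_matrix_orthonormal_columns orthogonal_def norm_eq_1
          flip: Ui0 inner_ones_unit_eq_0_iff)
    then have "T k = - 1"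
      using that q by (simp add: T column_givens_other matrix_vector_mult_basis
          matrix_vector_mult_diff_rdistrib inner_diff_right)
    then show ?thesis by simp
  qed
  have "2 \<le> CARD('n)" using card_mono[of UNIV "{i0, i1}"] i01 by simp
  then have "real CARD('n) - 1 < \<bar>T i0\<bar> powr p + \<bar>T i1\<bar> powr p + (\<Sum>k\<in>UNIV-{i0,i1}. \<bar>T k\<bar> powr p)"
    using Ti1 i01 by (simp add: Tk card_Diff_subset card_insert_if)
      (use powr_ge_zero[of "\<bar>T i0\<bar>" p] in linarith)
  then show ?thesis
    using U W by (intro exI conjI) (auto simp: T_def sum_UNIV_remove_two[OF i01])
qed

lemma transpose_diff_mat_one: "transpose ((A::real^'n^'n) - mat 1) = transpose A - mat 1"
  by (simp add: vec_eq_iff transpose_def mat_def)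

lemma inner_transpose_matrix: "x \<bullet> (transpose M *v y) = y \<bullet> ((M::real^'n^'n) *v x)"
  by (simp add: transpose_matrix_vector dot_lmul_matrix[symmetric] inner_commute)

lemma sum_singular_values_ge_card:
  fixes A :: "real^'n^'n"
  assumes p: "p > 1"
  shows "\<exists>B\<in>doubly_stochastic. real CARD('n) - 1 \<le> (\<Sum>k\<in>UNIV. singular_values (A - B) k powr p)"
proof -
  fix i0 :: 'n
  obtain U where U: "orthogonal_matrix U" and col: "column i0 U = ones_unit"
    using exists_orthogonal_matrix_column[OF norm_ones_unit] by blast
  obtain \<sigma> where \<sigma>: "bij \<sigma>" and t: "perm_diag_sum A \<sigma> \<le> entry_sum A / real CARD('n)"
    using exists_perm_diag_sum_le_mean[of id A] by auto
  have "real CARD('n) - 1 \<le> \<bar>entry_sum A / real CARD('n) - 1\<bar> powr p + (real CARD('n) - 1)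
      + p * (entry_sum A / real CARD('n) - perm_diag_sum A \<sigma>)"
    using t p by simp
  also have "\<dots> \<le> (\<Sum>k\<in>UNIV. singular_values (A - perm_matrix \<sigma>) k powr p)"
    by (rule sum_singular_values_ge[OF p \<sigma> U col])
  finally show ?thesis using perm_matrix_doubly_stochastic[OF \<sigma>] by blast
qed

text \<open>The degenerate case of the strict lower bound: every quadratic form \<open>u \<mapsto> u\<^sup>T A P\<^sup>T u\<close>
  vanishes on the complement of \<open>ones\<close>. Then \<open>A\<close> is \<open>J\<close> or fails to be row or column
  stochastic, and \<open>B = I\<close> works.\<close>
lemma sum_singular_values_gt_card_degenerate:
  fixes A :: "real^'n^'n"
  assumes p: "p > 1" and AJ: "A \<noteq> Jmat" and sum: "entry_sum A = real CARD('n)"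
    and H: "\<And>\<sigma> u. bij \<sigma> \<Longrightarrow> ones \<bullet> u = 0 \<Longrightarrow> u \<bullet> (A *v (transpose (perm_matrix \<sigma>) *v u)) = 0"
  shows "real CARD('n) - 1 < (\<Sum>k\<in>UNIV. singular_values (A - mat 1) k powr p)"
proof -
  have q: "g \<bullet> (A *v h) = 0" if "ones \<bullet> g = 0" "ones \<bullet> h = 0" for g h
    using form_vanishes_if_vanishes_on_axis_diff[OF _ that(2)]
      form_vanishes_on_axis_diff[OF H that(1)] by (metis diff_self inner_zero_right
        matrix_vector_mult_0_right)
  have "A *v ones \<noteq> ones \<or> transpose A *v ones \<noteq> ones"
    using eq_Jmat_if_form_vanishes[OF _ _ q] AJ by blast
  then obtain U W where U: "orthogonal_matrix U" and W: "orthogonal_matrix W"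
    and lt: "real CARD('n) - 1 < (\<Sum>k\<in>UNIV. \<bar>(transpose U ** (A - mat 1) ** W) $ k $ k\<bar> powr p)"
  proof
    assume "A *v ones \<noteq> ones"
    then show thesis using diag_powr_sum_gt_if_not_row_stochastic[OF p sum q] that by blast
  next
    assume "transpose A *v ones \<noteq> ones"
    moreover have "entry_sum (transpose A) = real CARD('n)"
      using sum by (simp add: entry_sum_def transpose_def sum.swap[of "\<lambda>i j. A$j$i"])
    moreover have "g \<bullet> (transpose A *v h) = 0" if "ones \<bullet> g = 0" "ones \<bullet> h = 0" for g h
      unfolding inner_transpose_matrix using q[OF that(2,1)] .
    ultimately obtain U W where "orthogonal_matrix U" "orthogonal_matrix W"
      "real CARD('n) - 1 < (\<Sum>k\<in>UNIV. \<bar>(transpose U ** (transpose A - mat 1) ** W) $ k $ k\<bar> powr p)"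
      using diag_powr_sum_gt_if_not_row_stochastic[OF p] by blast
    moreover have "(transpose U ** (transpose A - mat 1) ** W) $ k $ k =
        (transpose W ** (A - mat 1) ** U) $ k $ k" for k
      unfolding transpose_mult_mult_entry transpose_diff_mat_one[symmetric] inner_transpose_matrix ..
    ultimately show thesis using that by simp
  qed
  moreover have "(\<Sum>k\<in>UNIV. \<bar>(transpose U ** (A - mat 1) ** W) $ k $ k\<bar> powr p)
      \<le> (\<Sum>k\<in>UNIV. singular_values (A - mat 1) k powr p)"
    using p U W by (intro diag_powr_sum_le_singular_values) auto
  ultimately show ?thesis by linarith
qed

lemma sum_singular_values_gt_card_form:
  fixes A :: "real^'n^'n"
  assumes p: "p > 1" and sum: "entry_sum A = real CARD('n)"
    and \<sigma>: "bij \<sigma>" "perm_diag_sum A \<sigma> = 1"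
    and u: "ones \<bullet> u = 0" "u \<bullet> (A *v (transpose (perm_matrix \<sigma>) *v u)) \<noteq> 0"
  shows "real CARD('n) - 1 < (\<Sum>k\<in>UNIV. singular_values (A - perm_matrix \<sigma>) k powr p)"
proof -
  fix i0 :: 'n
  have "u \<noteq> 0" using u(2) by auto
  define g where "g = u /\<^sub>R norm u"
  have ng: "norm g = 1" and g1: "ones \<bullet> g = 0"
    and gA: "g \<bullet> (A *v (transpose (perm_matrix \<sigma>) *v g)) \<noteq> 0"
    using \<open>u \<noteq> 0\<close> u by (simp_all add: g_def matrix_vector_mult_scaleR)
  obtain i1 where i01: "i0 \<noteq> i1" using exists_other_index[OF g1, of i0] ng by force
  have "ones_unit \<bullet> g = 0" using g1 by (simp add: inner_ones_unit_eq_0_iff)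
  then obtain U where U: "orthogonal_matrix U" "column i0 U = ones_unit" "column i1 U = g"
    using exists_orthogonal_matrix_two_columns[OF norm_ones_unit ng _ i01] by blast
  have "real CARD('n) - 1 = \<bar>entry_sum A / real CARD('n) - 1\<bar> powr p + (real CARD('n) - 1)
      + p * (entry_sum A / real CARD('n) - perm_diag_sum A \<sigma>)"
    using sum \<sigma> by simp
  also have "\<dots> < (\<Sum>k\<in>UNIV. singular_values (A - perm_matrix \<sigma>) k powr p)"
    using i01 U gA by (intro sum_singular_values_gt[OF p \<sigma>(1) U(1,2)]) auto
  finally show ?thesis .
qed

lemma sum_singular_values_gt_card_perm:
  fixes A :: "real^'n^'n"
  assumes p: "p > 1" and \<sigma>: "bij \<sigma>"
    and pos: "0 < \<bar>entry_sum A / real CARD('n) - 1\<bar> powr p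
      + p * (entry_sum A / real CARD('n) - perm_diag_sum A \<sigma>)"
  shows "real CARD('n) - 1 < (\<Sum>k\<in>UNIV. singular_values (A - perm_matrix \<sigma>) k powr p)"
proof -
  fix i0 :: 'n
  obtain U where U: "orthogonal_matrix U" and col: "column i0 U = ones_unit"
    using exists_orthogonal_matrix_column[OF norm_ones_unit] by blast
  show ?thesis using sum_singular_values_ge[OF p \<sigma> U col, of A] pos by linarith
qed

lemma sum_singular_values_gt_card:
  fixes A :: "real^'n^'n"
  assumes p: "p > 1" and AJ: "A \<noteq> Jmat"
  shows "\<exists>B\<in>doubly_stochastic. real CARD('n) - 1 < (\<Sum>k\<in>UNIV. singular_values (A - B) k powr p)"
proof -
  define a where "a = entry_sum A / real CARD('n)"
  show ?thesis
  proof (cases "\<exists>\<sigma>. bij \<sigma> \<and> perm_diag_sum A \<sigma> \<noteq> a")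
    case True
    then obtain \<sigma> where \<sigma>: "bij \<sigma>" and "perm_diag_sum A \<sigma> < a"
      using exists_perm_diag_sum_le_mean[of _ A] by (auto simp: a_def)
    then have "0 < \<bar>a - 1\<bar> powr p + p * (a - perm_diag_sum A \<sigma>)" using p by (simp add: add_nonneg_pos)
    then show ?thesis
      using sum_singular_values_gt_card_perm[OF p \<sigma>] perm_matrix_doubly_stochastic[OF \<sigma>]
      unfolding a_def by blast
  next
    case False
    then have tsig: "\<And>\<sigma>. bij \<sigma> \<Longrightarrow> perm_diag_sum A \<sigma> = a" by blast
    show ?thesis
    proof (cases "a = 1")
      case False
      then show ?thesis using sum_singular_values_gt_card_perm[OF p, of id A] tsig[of id]
        perm_matrix_doubly_stochastic[of id] by (auto simp: a_def)
    next
      case True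
      then have sum: "entry_sum A = real CARD('n)" by (simp add: a_def)
      show ?thesis
      proof (cases "\<exists>\<sigma> u. bij \<sigma> \<and> ones \<bullet> u = 0 \<and> u \<bullet> (A *v (transpose (perm_matrix \<sigma>) *v u)) \<noteq> 0")
        case True
        then obtain \<sigma> u where "bij \<sigma>" "ones \<bullet> u = 0"
          "u \<bullet> (A *v (transpose (perm_matrix \<sigma>) *v u)) \<noteq> 0" by blast
        then show ?thesis
          using sum_singular_values_gt_card_form[OF p sum] tsig \<open>a = 1\<close>
            perm_matrix_doubly_stochastic by blast
      next
        case False
        then show ?thesis
          using sum_singular_values_gt_card_degenerate[OF p AJ sum] perm_matrix_doubly_stochastic[of id]
          by (auto simp: perm_matrix_id)
      qed
    qed
  qed
qed

section \<open>The Chebyshev centre\<close>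

lemma bdd_above_schatten_norm_diff:
  fixes A :: "real^'n^'n"
  assumes p: "p > 0"
  shows "bdd_above ((\<lambda>B. schatten_norm p (A - B)) ` doubly_stochastic)"
proof -
  define C where "C = (\<Sum>i\<in>UNIV. \<Sum>j\<in>UNIV. \<bar>A$i$j\<bar> + 1)"
  have "schatten_norm p (A - B) \<le> (real CARD('n) * C powr p) powr (1 / p)"
    if B: "B \<in> doubly_stochastic" for B
  proof -
    have "singular_values (A - B) k \<le> C" for k
    proof -
      have "\<bar>(A - B)$i$j\<bar> \<le> \<bar>A$i$j\<bar> + 1" for i j
        using doubly_stochastic_entry_bounds[OF B, of i j] by simp
      then have "(\<Sum>i\<in>UNIV. \<Sum>j\<in>UNIV. \<bar>(A - B)$i$j\<bar>) \<le> C"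
        unfolding C_def by (intro sum_mono)
      then show ?thesis using singular_value_le_entry_sum[of "A - B" k] by linarith
    qed
    then have "(\<Sum>k\<in>UNIV. singular_values (A - B) k powr p) \<le> (\<Sum>k\<in>(UNIV::'n set). C powr p)"
      using p by (intro sum_mono powr_mono2) (auto simp: singular_values_nonneg)
    then show ?thesis
      unfolding schatten_norm_def using p
      by (intro powr_mono2) (auto simp: singular_values_nonneg intro!: sum_nonneg)
  qed
  then show ?thesis by (intro bdd_aboveI2) blast
qed

lemma schatten_norm_Jmat_minus_le:
  fixes B :: "real^'n^'n"
  assumes "p > 0" and "B \<in> doubly_stochastic"
  shows "schatten_norm p (Jmat - B) \<le> (real CARD('n) - 1) powr (1 / p)"
  unfolding schatten_norm_def using sum_singular_values_Jmat_minus_le[OF assms(2,1)] assms(1)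
  by (intro powr_mono2) (auto simp: singular_values_nonneg intro!: sum_nonneg)

lemma exists_schatten_norm_diff_ge:
  fixes A :: "real^'n^'n"
  assumes p: "p > 1"
  shows "\<exists>B\<in>doubly_stochastic. (real CARD('n) - 1) powr (1 / p) \<le> schatten_norm p (A - B)"
proof -
  obtain B where "B \<in> doubly_stochastic"
    and "real CARD('n) - 1 \<le> (\<Sum>k\<in>UNIV. singular_values (A - B) k powr p)"
    using sum_singular_values_ge_card[OF p, of A] by blast
  then show ?thesis unfolding schatten_norm_def using p by (intro bexI[of _ B] powr_mono2) auto
qed

lemma exists_schatten_norm_diff_gt:
  fixes A :: "real^'n^'n"
  assumes p: "p > 1" and "A \<noteq> Jmat"
  shows "\<exists>B\<in>doubly_stochastic. (real CARD('n) - 1) powr (1 / p) < schatten_norm p (A - B)"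
proof -
  obtain B where "B \<in> doubly_stochastic"
    and "real CARD('n) - 1 < (\<Sum>k\<in>UNIV. singular_values (A - B) k powr p)"
    using sum_singular_values_gt_card[OF assms] by blast
  then show ?thesis unfolding schatten_norm_def using p by (intro bexI[of _ B] powr_less_mono2) auto
qed

lemma unique_minimiser:
  fixes f :: "'a \<Rightarrow> real"
  assumes "f a \<le> r" and "\<And>x. r \<le> f x" and "\<And>x. x \<noteq> a \<Longrightarrow> r < f x"
  shows "(\<forall>x. f a \<le> f x) \<and> (\<forall>x. (\<forall>y. f x \<le> f y) \<longrightarrow> x = a) \<and> (INF x. f x) = r"
proof -
  have fa: "f a = r" using assms(1,2) by (simp add: antisym)
  have "(INF x. f x) = r"
  proof (rule antisym)
    show "(INF x. f x) \<le> r" using fa by (metis cINF_lower bdd_belowI2 assms(2) UNIV_I)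
    show "r \<le> (INF x. f x)" using assms(2) by (intro cINF_greatest) auto
  qed
  moreover have "x = a" if "\<forall>y. f x \<le> f y" for x
  proof (rule ccontr)
    assume "x \<noteq> a"
    then have "r < f x" by (rule assms(3))
    moreover have "f x \<le> f a" using that by blast
    ultimately show False using fa by simp
  qed
  ultimately show ?thesis using fa assms(2) by auto
qed

theorem mainTheorem6:
  fixes p :: real
  assumes "1 < p"
  shows "(\<forall>A :: real^'n^'n.
            (SUP B\<in>doubly_stochastic. schatten_norm p ((Jmat :: real^'n^'n) - B))
              \<le> (SUP B\<in>doubly_stochastic. schatten_norm p (A - B)))
       \<and> (\<forall>A :: real^'n^'n.
            (\<forall>A' :: real^'n^'n.
               (SUP B\<in>doubly_stochastic. schatten_norm p (A - B))
                 \<le> (SUP B\<in>doubly_stochastic. schatten_norm p (A' - B))) \<longrightarrow> A = (Jmat :: real^'n^'n))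
       \<and> (INF A :: real^'n^'n. (SUP B\<in>doubly_stochastic. schatten_norm p (A - B)))
            = (real CARD('n) - 1) powr (1 / p)"
proof -
  define f where "f A = (SUP B\<in>doubly_stochastic. schatten_norm p (A - B))" for A :: "real^'n^'n"
  have bdd: "bdd_above ((\<lambda>B. schatten_norm p (A - B)) ` doubly_stochastic)" for A :: "real^'n^'n"
    using assms by (intro bdd_above_schatten_norm_diff) simp
  have "f Jmat \<le> (real CARD('n) - 1) powr (1 / p)"
    unfolding f_def using assms Jmat_doubly_stochastic
    by (intro cSUP_least schatten_norm_Jmat_minus_le) auto
  moreover have "(real CARD('n) - 1) powr (1 / p) \<le> f A" for A
    using exists_schatten_norm_diff_ge[OF assms, of A] unfolding f_def
    by (auto intro: cSUP_upper2[OF bdd])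
  moreover have "(real CARD('n) - 1) powr (1 / p) < f A" if "A \<noteq> Jmat" for A
    using exists_schatten_norm_diff_gt[OF assms that] unfolding f_def
    by (auto intro: less_le_trans cSUP_upper[OF _ bdd])
  ultimately show ?thesis
    using unique_minimiser[of f Jmat "(real CARD('n) - 1) powr (1 / p)"] unfolding f_def by blast
qed
end
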